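(* Let $d,m\in\mathbb{N}$, let $\mathcal{X}\subseteq\mathbb{R}^d$ be a bounded domain, $\mathcal{Y}=\{-1,1\}$, $\mathcal{Z}=\mathcal{X}\times\mathcal{Y}$, and let $\rho$ be a probability distribution on $\mathcal{Z}$. Let ${\bf z}=\{z_i=(x_i,y_i): i=1,\dots,m\}$ be drawn i.i.d. from $\rho$. Fix $r>0$, $\lambda>0$ and a matrix norm $\|\cdot\|$ on $d\times d$ matrices. For symmetric $A\in\mathbb{S}^{d\times d}$ let $K_A(x,x')=x^TAx'$ and $$\mathcal{E}_{\bf z}(A)=\frac1m\sum_{i=1}^m\Big(1-\frac{1}{mr}\sum_{j=1}^m y_iy_jK_A(x_i,x_j)\Big)_+,$$ and let $A_{\bf z}\in\arg\min_{A\in\mathbb{S}^{d\times d}}\big[\mathcal{E}_{\bf z}(A)+\lambda\|A\|\big]$. Let $$f_{\bf z}\in\arg\min\Big\{\frac1m\sum_{i=1}^m(1-y_if(x_i))_+ : f=\sum_{j=1}^m\alpha_jK_{A_{\bf z}}(x_j,\cdot),\ \alpha_j\in\mathbb{R},\ \sum_{j=1}^m|\alpha_j|\le 1/r\Big\},$$ and for a function $f:\mathcal{X}\to\mathbb{R}$ let $\mathscr{E}(f)=\int_{\mathcal{Z}}(1-yf(x))_+\,d\rho(x,y)$. Then for any $0<\delta<1$, with probability at least $1-\delta$ over ${\bf z}$, $$\mathscr{E}(f_{\bf z})\le \mathcal{E}_{\bf z}(A_{\bf z})+\frac{4\mathcal{R}_m}{\lambda r}+\frac{2X_*}{\lambda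 r}\sqrt{\frac{2\log(1/\delta)}{m}},$$ where $X_*=\sup_{x,x'\in\mathcal{X}}\|x'x^T\|_*$ and $\mathcal{R}_m=\mathbb{E}_{{\bf z},\sigma}\Big[\sup_{\tilde x\in\mathcal{X}}\Big\|\frac1m\sum_{i=1}^m\sigma_iy_ix_i\tilde x^T\Big\|_*\Big]$.
   Context: $(t)_+=\max(t,0)$. The dual norm is $\|B\|_*=\sup_{\|A\|\le1}\mathrm{trace}(B^TA)$. In $\mathcal{R}_m$, $\sigma_1,\dots,\sigma_m$ are i.i.d. Rademacher variables ($P(\sigma_i=\pm1)=1/2$) independent of ${\bf z}$, and the expectation is over both ${\bf z}$ and $\sigma$. $\mathbb{S}^{d\times d}$ denotes the symmetric $d\times d$ real matrices. *)

theory Defs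
  imports "HOL-Analysis.Analysis" "HOL-Probability.Probability"
begin

definition pos_part :: "real \<Rightarrow> real" where
  "pos_part t = max t 0"

definition is_matrix_norm :: "(real^'d^'d \<Rightarrow> real) \<Rightarrow> bool" where
  "is_matrix_norm N \<longleftrightarrow>
     (\<forall>A. 0 \<le> N A) \<and> (\<forall>A. N A = 0 \<longleftrightarrow> A = 0) \<and>
     (\<forall>c A. N (c *\<^sub>R A) = \<bar>c\<bar> * N A) \<and>
     (\<forall>A B. N (A + B) \<le> N A + N B)"

definition dual_norm :: "(real^'d^'d \<Rightarrow> real) \<Rightarrow> real^'d^'d \<Rightarrow> real" where
  "dual_norm N B = Sup {trace (transpose B ** A) | A. N A \<le> 1}"

definition outer :: "real^'d \<Rightarrow> real^'d \<Rightarrow> real^'d^'d" where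
  "outer u v = (\<chi> i j. u $ i * v $ j)"

definition KA :: "real^'d^'d \<Rightarrow> real^'d \<Rightarrow> real^'d \<Rightarrow> real" where
  "KA A x x' = x \<bullet> (A *v x')"

definition emp_err_A :: "nat \<Rightarrow> real \<Rightarrow> (nat \<Rightarrow> (real^'d) \<times> real) \<Rightarrow> real^'d^'d \<Rightarrow> real" where
  "emp_err_A m r z A = (1 / real m) * (\<Sum>i<m. pos_part (1 - (1 / (real m * r)) *
      (\<Sum>j<m. snd (z i) * snd (z j) * KA A (fst (z i)) (fst (z j)))))"

definition emp_hinge :: "nat \<Rightarrow> (nat \<Rightarrow> (real^'d) \<times> real) \<Rightarrow> (real^'d \<Rightarrow> real) \<Rightarrow> real" where
  "emp_hinge m z f = (1 / real m) * (\<Sum>i<m. pos_part (1 - snd (z i) * f (fst (z i))))"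

definition hyp_space :: "nat \<Rightarrow> real \<Rightarrow> (nat \<Rightarrow> (real^'d) \<times> real) \<Rightarrow> real^'d^'d \<Rightarrow> (real^'d \<Rightarrow> real) set" where
  "hyp_space m r z A = {f. \<exists>\<alpha>::nat \<Rightarrow> real. (\<Sum>j<m. \<bar>\<alpha> j\<bar>) \<le> 1 / r \<and>
       f = (\<lambda>x. \<Sum>j<m. \<alpha> j * KA A (fst (z j)) x)}"

definition gen_err :: "((real^'d) \<times> real) measure \<Rightarrow> (real^'d \<Rightarrow> real) \<Rightarrow> real" where
  "gen_err \<rho> f = (\<integral>zz. pos_part (1 - snd zz * f (fst zz)) \<partial>\<rho>)"

definition rademacher :: "real measure" where
  "rademacher = measure_pmf (pmf_of_set {-1, 1})"

definition sample_measure :: "nat \<Rightarrow> ((real^'d) \<times> real) measure \<Rightarrow> (nat \<Rightarrow> (real^'d) \<times> real) measure" where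
  "sample_measure m \<rho> = PiM {..<m} (\<lambda>_. \<rho>)"

definition Xstar :: "(real^'d^'d \<Rightarrow> real) \<Rightarrow> (real^'d) set \<Rightarrow> real" where
  "Xstar N X = Sup {dual_norm N (outer x' x) | x x'. x \<in> X \<and> x' \<in> X}"

definition rad_complexity ::
  "nat \<Rightarrow> ((real^'d) \<times> real) measure \<Rightarrow> (real^'d^'d \<Rightarrow> real) \<Rightarrow> (real^'d) set \<Rightarrow> real" where
  "rad_complexity m \<rho> N X =
     (\<integral>p. Sup ((\<lambda>xt. dual_norm N ((1 / real m) *\<^sub>R
          (\<Sum>i<m. (snd p i * snd (fst p i)) *\<^sub>R outer (fst (fst p i)) xt))) ` X)
      \<partial>(sample_measure m \<rho> \<Otimes>\<^sub>M PiM {..<m} (\<lambda>_. rademacher)))"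

end

theory Submission
  imports Defs
begin

text \<open>
  Since \<open>A\<^sub>z\<close> beats \<open>A = 0\<close> in the regularised objective, \<open>\<lambda> \<parallel>A\<^sub>z\<parallel> \<le> 1\<close>, so every admissible
  hypothesis \<open>f = \<Sum>\<^sub>j \<alpha>\<^sub>j K\<^bsub>A\<^sub>z\<^esub>(x\<^sub>j, \<cdot>)\<close> is a linear functional \<open>x \<mapsto> w \<bullet> x\<close> whose weight \<open>w\<close> satisfies
  \<open>w \<bullet> v \<le> sup\<^sub>x\<^sub>\<in>\<^sub>X \<parallel>v x\<^sup>T\<parallel>\<^sub>* / (\<lambda> r)\<close> for all \<open>v\<close>; this set of weights is compact because \<open>X\<close> is
  open and bounded. Moreover the comparison hypothesis \<open>\<alpha>\<^sub>j = y\<^sub>j / (m r)\<close> has empirical hinge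
  error exactly \<open>\<E>\<^sub>z(A\<^sub>z)\<close>. It therefore suffices to bound the uniform deviation between true and
  empirical hinge risk over this class. On a finite net of the class, McDiarmid's inequality
  concentrates the supremum of the deviations around its mean, and symmetrization followed by
  the contraction principle (the hinge loss is 1-Lipschitz) bounds that mean by \<open>2 \<R>\<^sub>m / (\<lambda> r)\<close>;
  Lipschitz continuity of the risks in \<open>w\<close> transfers the bound from the net to the whole class.
\<close>

section \<open>Outer products and dual norms\<close>

lemma trace_transpose_mult_eq_inner: "trace (transpose B ** A) = B \<bullet> (A :: real^'d^'d)"
  unfolding trace_def transpose_def matrix_matrix_mult_def inner_vec_def
  by (simp add: inner_real_def, subst sum.swap) (simp add: mult.commute)

lemma inner_outer_eq_KA: "outer u v \<bullet> A = KA A u v"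
  unfolding outer_def KA_def inner_vec_def matrix_vector_mult_def
  by (simp add: sum_distrib_left mult_ac)

lemma KA_sym:
  assumes "transpose A = A"
  shows "KA A u v = KA A v u"
proof -
  have term_sym: "u $ i * A $ i $ j * v $ j = v $ j * A $ j $ i * u $ i" for i j
    using arg_cong[OF assms, of "\<lambda>B. B $ j $ i"] by (simp add: transpose_def)
  have "KA A u v = (\<Sum>i\<in>UNIV. \<Sum>j\<in>UNIV. u $ i * A $ i $ j * v $ j)"
    unfolding KA_def inner_vec_def matrix_vector_mult_def by (simp add: sum_distrib_left mult_ac)
  also have "\<dots> = (\<Sum>j\<in>UNIV. \<Sum>i\<in>UNIV. v $ j * A $ j $ i * u $ i)"
    by (subst sum.swap) (simp only: term_sym)
  also have "\<dots> = KA A v u"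
    unfolding KA_def inner_vec_def matrix_vector_mult_def by (simp add: sum_distrib_left mult_ac)
  finally show ?thesis .
qed

lemma outer_sum_left: "(\<Sum>i\<in>I. c i *\<^sub>R outer (u i) v) = outer (\<Sum>i\<in>I. c i *\<^sub>R u i) v"
  unfolding outer_def by (simp add: vec_eq_iff sum_component sum_distrib_right mult.assoc)

lemma scaleR_outer_left: "a *\<^sub>R outer u v = outer (a *\<^sub>R u) v"
  unfolding outer_def by (simp add: vec_eq_iff mult.assoc)

lemma outer_diff_left: "outer u v - outer u' v = outer (u - u') v"
  unfolding outer_def by (simp add: vec_eq_iff algebra_simps)

lemma norm_outer: "norm (outer u v) = norm u * norm v"
proof -
  have "outer u v $ i = (u $ i) *\<^sub>R v" for i
    unfolding outer_def by (simp add: vec_eq_iff)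
  then have row: "norm (outer u v $ i) = norm v * \<bar>u $ i\<bar>" for i
    by (simp add: mult.commute)
  have "norm (outer u v) = L2_set (\<lambda>i. norm v * \<bar>u $ i\<bar>) UNIV"
    by (subst norm_vec_def) (simp only: row)
  also have "\<dots> = norm v * norm u"
    unfolding norm_vec_def by (subst L2_set_right_distrib[symmetric]) simp_all
  finally show ?thesis by simp
qed

context
  fixes N :: "real^'d^'d \<Rightarrow> real"
  assumes N: "is_matrix_norm N"
begin

lemma matrix_norm_nonneg: "0 \<le> N A"
  and matrix_norm_eq_0_iff: "N A = 0 \<longleftrightarrow> A = 0"
  and matrix_norm_scaleR: "N (c *\<^sub>R A) = \<bar>c\<bar> * N A"
  and matrix_norm_triangle: "N (A + B) \<le> N A + N B"
  using N unfolding is_matrix_norm_def by blast+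

lemma matrix_norm_0 [simp]: "N 0 = 0"
  using matrix_norm_eq_0_iff by simp

lemma matrix_norm_minus: "N (- A) = N A"
  using matrix_norm_scaleR[of "-1" A] by simp

lemma matrix_norm_continuous: "continuous_on UNIV N"
proof (rule convex_on_continuous[OF open_UNIV], rule convex_onI)
  fix t :: real and A B assume t: "0 < t" "t < 1"
  have "N ((1 - t) *\<^sub>R A + t *\<^sub>R B) \<le> N ((1 - t) *\<^sub>R A) + N (t *\<^sub>R B)"
    by (rule matrix_norm_triangle)
  also have "\<dots> = (1 - t) * N A + t * N B" using t by (simp add: matrix_norm_scaleR)
  finally show "N ((1 - t) *\<^sub>R A + t *\<^sub>R B) \<le> (1 - t) * N A + t * N B" .
qed simp

text \<open>The minimum of \<open>N\<close> on the Euclidean unit sphere is positive.\<close>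
lemma matrix_norm_ge_scaled_norm: "\<exists>c>0. \<forall>A. c * norm A \<le> N A"
proof -
  obtain b :: "real^'d^'d" where "b \<in> Basis" using nonempty_Basis by blast
  then have "sphere (0::real^'d^'d) 1 \<noteq> {}" by (auto intro!: exI[of _ b])
  then obtain A0 where A0: "A0 \<in> sphere 0 1" "\<forall>A\<in>sphere 0 1. N A0 \<le> N A"
    using continuous_attains_inf[OF compact_sphere _ continuous_on_subset[OF matrix_norm_continuous]]
    by blast
  have pos: "N A0 > 0"
    using A0(1) matrix_norm_nonneg[of A0] matrix_norm_eq_0_iff[of A0] by fastforce
  have "N A0 * norm A \<le> N A" for A
  proof (cases "A = 0")
    case False
    then have "N A0 \<le> N ((1 / norm A) *\<^sub>R A)" using A0 by auto
    then show ?thesis using False by (simp add: matrix_norm_scaleR field_simps)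
  qed simp
  with pos show ?thesis by blast
qed

lemma inner_le_of_matrix_norm_le_1:
  assumes c: "c > 0" "\<And>A. c * norm A \<le> N A" and A: "N A \<le> 1"
  shows "B \<bullet> A \<le> norm B / c"
proof -
  have "norm A \<le> 1 / c" using c(2)[of A] A c(1) by (simp add: field_simps)
  then have "norm B * norm A \<le> norm B / c" by (simp add: mult_left_mono divide_inverse)
  then show ?thesis using norm_cauchy_schwarz[of B A] by linarith
qed

lemma dual_norm_set_eq: "{trace (transpose B ** A) | A. N A \<le> 1} = (\<lambda>A. B \<bullet> A) ` {A. N A \<le> 1}"
  by (auto simp: trace_transpose_mult_eq_inner)

lemma dual_norm_le_norm: "\<exists>C>0. \<forall>B. dual_norm N B \<le> C * norm B"
proof -
  obtain c where c: "c > 0" "\<And>A. c * norm A \<le> N A" using matrix_norm_ge_scaled_norm by blast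
  have "dual_norm N B \<le> (1 / c) * norm B" for B
    unfolding dual_norm_def dual_norm_set_eq
    by (rule cSup_least) (auto intro: inner_le_of_matrix_norm_le_1[OF c] exI[of _ 0])
  with c show ?thesis by (intro exI[of _ "1 / c"]) auto
qed

lemma dual_norm_ge_inner:
  assumes "N A \<le> 1"
  shows "B \<bullet> A \<le> dual_norm N B"
proof -
  obtain c where c: "c > 0" "\<And>A. c * norm A \<le> N A" using matrix_norm_ge_scaled_norm by blast
  have "bdd_above ((\<lambda>A. B \<bullet> A) ` {A. N A \<le> 1})"
    by (rule bdd_aboveI[of _ "norm B / c"]) (auto intro: inner_le_of_matrix_norm_le_1[OF c])
  then show ?thesis
    unfolding dual_norm_def dual_norm_set_eq by (rule cSup_upper[rotated]) (use assms in auto)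
qed

lemma dual_norm_nonneg: "0 \<le> dual_norm N B"
  using dual_norm_ge_inner[of 0 B] by simp

lemma inner_le_matrix_norm_mult_dual: "B \<bullet> A \<le> N A * dual_norm N B"
proof (cases "A = 0")
  case False
  then have pos: "N A > 0" using matrix_norm_nonneg[of A] matrix_norm_eq_0_iff[of A] by linarith
  have "B \<bullet> ((1 / N A) *\<^sub>R A) \<le> dual_norm N B"
    by (rule dual_norm_ge_inner) (use pos in \<open>simp add: matrix_norm_scaleR\<close>)
  then show ?thesis using pos by (simp add: field_simps)
qed (simp add: dual_norm_nonneg)

lemma abs_inner_le_matrix_norm_mult_dual: "\<bar>B \<bullet> A\<bar> \<le> N A * dual_norm N B"
  using inner_le_matrix_norm_mult_dual[of B A] inner_le_matrix_norm_mult_dual[of B "- A"]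
  by (simp add: matrix_norm_minus)

lemma dual_norm_triangle: "dual_norm N (B + B') \<le> dual_norm N B + dual_norm N B'"
  unfolding dual_norm_def[of N "B + B'"] dual_norm_set_eq
proof (rule cSup_least)
  show "(\<lambda>A. (B + B') \<bullet> A) ` {A. N A \<le> 1} \<noteq> {}" by (auto intro: exI[of _ 0])
  fix t assume "t \<in> (\<lambda>A. (B + B') \<bullet> A) ` {A. N A \<le> 1}"
  then obtain A where "t = B \<bullet> A + B' \<bullet> A" "N A \<le> 1" by (auto simp: inner_add_left)
  then show "t \<le> dual_norm N B + dual_norm N B'"
    using dual_norm_ge_inner[of A B] dual_norm_ge_inner[of A B'] by linarith
qed

end

definition max_over :: "'w set \<Rightarrow> ('w \<Rightarrow> real) \<Rightarrow> real" where
  "max_over D h = Max (h ` D)"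

context
  fixes D :: "'w set"
  assumes D: "finite D" "D \<noteq> {}"
begin

lemma max_over_ge: "w \<in> D \<Longrightarrow> h w \<le> max_over D h"
  unfolding max_over_def using D by (intro Max_ge) auto

lemma max_over_le_iff: "max_over D h \<le> c \<longleftrightarrow> (\<forall>w\<in>D. h w \<le> c)"
  unfolding max_over_def using D by (subst Max_le_iff) auto

lemma max_over_attained:
  obtains w where "w \<in> D" "max_over D h = h w"
proof -
  have "Max (h ` D) \<in> h ` D" by (rule Max_in) (use D in auto)
  then show ?thesis using that unfolding max_over_def by auto
qed

lemma max_over_cong: "(\<And>w. w \<in> D \<Longrightarrow> h w = h' w) \<Longrightarrow> max_over D h = max_over D h'"
  unfolding max_over_def by (simp cong: image_cong)

lemma max_over_mono: "(\<And>w. w \<in> D \<Longrightarrow> h w \<le> h' w) \<Longrightarrow> max_over D h \<le> max_over D h'"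
  unfolding max_over_le_iff by (meson max_over_ge order.trans)

lemma max_over_const: "max_over D (\<lambda>_. c) = c"
  by (metis max_over_attained)

lemma max_over_add_le: "max_over D (\<lambda>w. h w + h' w) \<le> max_over D h + max_over D h'"
  unfolding max_over_le_iff by (meson add_mono max_over_ge)

lemma max_over_mult_left: "c \<ge> 0 \<Longrightarrow> max_over D (\<lambda>w. c * h w) = c * max_over D h"
proof -
  assume c: "c \<ge> 0"
  obtain w where w: "w \<in> D" "max_over D h = h w" using max_over_attained by blast
  obtain w' where w': "w' \<in> D" "max_over D (\<lambda>w. c * h w) = c * h w'" using max_over_attained by blast
  have "c * h w \<le> c * h w'" using max_over_ge[of w "\<lambda>w. c * h w"] w w' by simp
  moreover have "c * h w' \<le> c * h w" using max_over_ge[of w' h] w w' c by (simp add: mult_left_mono)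
  ultimately show ?thesis using w w' by (metis antisym)
qed

lemma abs_max_over_le: "(\<And>w. w \<in> D \<Longrightarrow> \<bar>h w\<bar> \<le> C) \<Longrightarrow> \<bar>max_over D h\<bar> \<le> C"
  by (metis max_over_attained)

lemma borel_measurable_max_over [measurable (raw)]:
  "(\<And>w. (\<lambda>x. f w x) \<in> borel_measurable M) \<Longrightarrow> (\<lambda>x. max_over D (\<lambda>w. f w x)) \<in> borel_measurable M"
  unfolding max_over_def by (rule borel_measurable_Max[OF D(1)]) auto

lemma integrable_max_over:
  assumes "\<And>w. w \<in> D \<Longrightarrow> integrable M (f w)"
  shows "integrable M (\<lambda>x. max_over D (\<lambda>w. f w x))"
proof (rule Bochner_Integration.integrable_bound[of _ "\<lambda>x. \<Sum>w\<in>D. \<bar>f w x\<bar>"])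
  show "integrable M (\<lambda>x. \<Sum>w\<in>D. \<bar>f w x\<bar>)" using assms by auto
  show "(\<lambda>x. max_over D (\<lambda>w. f w x)) \<in> borel_measurable M"
    unfolding max_over_def by (rule borel_measurable_Max[OF D(1)]) (use assms in auto)
  have "\<bar>max_over D (\<lambda>w. f w x)\<bar> \<le> (\<Sum>w\<in>D. \<bar>f w x\<bar>)" for x
    by (rule abs_max_over_le) (rule member_le_sum, auto simp: D)
  then show "AE x in M. norm (max_over D (\<lambda>w. f w x)) \<le> norm (\<Sum>w\<in>D. \<bar>f w x\<bar>)"
    by (auto intro!: AE_I2 order.trans[OF _ abs_ge_self])
qed

lemma max_over_integral_le:
  assumes "\<And>w. w \<in> D \<Longrightarrow> integrable M (f w)"
  shows "max_over D (\<lambda>w. \<integral>x. f w x \<partial>M) \<le> (\<integral>x. max_over D (\<lambda>w. f w x) \<partial>M)"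
  unfolding max_over_le_iff
  by (auto intro!: integral_mono assms integrable_max_over max_over_ge)

end

definition sign_vectors :: "nat set \<Rightarrow> (nat \<Rightarrow> real) set" where
  "sign_vectors I = PiE I (\<lambda>_. {-1, 1})"

definition sign_avg :: "nat set \<Rightarrow> ((nat \<Rightarrow> real) \<Rightarrow> real) \<Rightarrow> real" where
  "sign_avg I F = (\<Sum>\<sigma>\<in>sign_vectors I. F \<sigma>) / 2 ^ card I"

lemma sign_avg_empty: "sign_avg {} F = F (\<lambda>_. undefined)"
  by (simp add: sign_avg_def sign_vectors_def)

lemma sign_avg_insert:
  assumes I: "finite I" "i \<notin> I"
  shows "sign_avg (insert i I) F = (sign_avg I (\<lambda>\<sigma>. F (\<sigma>(i:=1))) + sign_avg I (\<lambda>\<sigma>. F (\<sigma>(i:=-1)))) / 2"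
proof -
  let ?upd = "\<lambda>(s, \<sigma>). \<sigma>(i:=s)"
  have eq: "sign_vectors (insert i I) = ?upd ` ({-1, 1} \<times> sign_vectors I)"
    unfolding sign_vectors_def by (rule PiE_insert_eq)
  have "inj_on ?upd ({-1, 1} \<times> sign_vectors I)"
  proof (rule inj_onI, clarsimp)
    fix s \<sigma> s' \<sigma>' assume "\<sigma> \<in> sign_vectors I" "\<sigma>' \<in> sign_vectors I" and e: "\<sigma>(i:=s) = \<sigma>'(i:=s')"
    then have "\<sigma> i = undefined" "\<sigma>' i = undefined"
      using I unfolding sign_vectors_def by (auto simp: PiE_def extensional_def)
    then show "s = s' \<and> \<sigma> = \<sigma>'"
      using fun_cong[OF e] by (metis fun_upd_apply ext)
  qed
  then have "(\<Sum>\<sigma>\<in>sign_vectors (insert i I). F \<sigma>) = (\<Sum>p\<in>{-1, 1} \<times> sign_vectors I. F (?upd p))"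
    unfolding eq by (rule sum.reindex[unfolded comp_def])
  also have "\<dots> = (\<Sum>s\<in>{-1, 1}. \<Sum>\<sigma>\<in>sign_vectors I. F (\<sigma>(i:=s)))"
    by (subst sum.cartesian_product) (simp add: case_prod_unfold)
  also have "\<dots> = (\<Sum>\<sigma>\<in>sign_vectors I. F (\<sigma>(i:=1))) + (\<Sum>\<sigma>\<in>sign_vectors I. F (\<sigma>(i:=-1)))"
    by simp
  finally show ?thesis using I unfolding sign_avg_def by (simp add: field_simps)
qed

lemma sign_avg_mono:
  "finite I \<Longrightarrow> (\<And>\<sigma>. \<sigma> \<in> sign_vectors I \<Longrightarrow> F \<sigma> \<le> G \<sigma>) \<Longrightarrow> sign_avg I F \<le> sign_avg I G"
  unfolding sign_avg_def by (intro divide_right_mono sum_mono) auto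

lemma sign_avg_add: "sign_avg I (\<lambda>\<sigma>. F \<sigma> + G \<sigma>) = sign_avg I F + sign_avg I G"
  unfolding sign_avg_def by (simp add: sum.distrib add_divide_distrib)

lemma sign_avg_mult_left: "sign_avg I (\<lambda>\<sigma>. c * F \<sigma>) = c * sign_avg I F"
  unfolding sign_avg_def by (simp add: sum_distrib_left)

lemma sign_avg_nonneg: "(\<And>\<sigma>. 0 \<le> F \<sigma>) \<Longrightarrow> 0 \<le> sign_avg I F"
  unfolding sign_avg_def by (simp add: sum_nonneg)

lemma integrable_sign_avg:
  "(\<And>\<sigma>. integrable M (F \<sigma>)) \<Longrightarrow> integrable M (\<lambda>x. sign_avg I (\<lambda>\<sigma>. F \<sigma> x))"
  unfolding sign_avg_def by auto

section \<open>Rademacher variables\<close>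

lemma prob_space_rademacher: "prob_space rademacher"
  unfolding rademacher_def by (rule prob_space_measure_pmf)

lemma space_rademacher [simp]: "space rademacher = UNIV"
  unfolding rademacher_def by simp

lemma integral_rademacher:
  fixes f :: "real \<Rightarrow> real"
  shows "(\<integral>s. f s \<partial>rademacher) = (f 1 + f (-1)) / 2"
proof -
  have "(\<integral>s. f s \<partial>measure_pmf (pmf_of_set {-1, 1::real}))
      = (\<Sum>s\<in>{-1, 1}. pmf (pmf_of_set {-1, 1::real}) s *\<^sub>R f s)"
    by (rule integral_measure_pmf) auto
  then show ?thesis unfolding rademacher_def by (simp add: field_simps)
qed

lemma integral_PiM_rademacher:
  fixes f :: "(nat \<Rightarrow> real) \<Rightarrow> real"
  assumes "finite I" and "f \<in> borel_measurable (PiM I (\<lambda>_. rademacher))"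
    and "\<And>\<sigma>. \<sigma> \<in> space (PiM I (\<lambda>_. rademacher)) \<Longrightarrow> \<bar>f \<sigma>\<bar> \<le> C"
  shows "(\<integral>\<sigma>. f \<sigma> \<partial>PiM I (\<lambda>_. rademacher)) = sign_avg I f"
  using assms
proof (induction I arbitrary: f rule: finite_induct)
  case empty
  then show ?case by (simp add: PiM_empty lebesgue_integral_count_space_finite sign_avg_empty)
next
  case (insert i I)
  let ?P = "PiM I (\<lambda>_. rademacher)"
  interpret R: prob_space rademacher by (rule prob_space_rademacher)
  interpret product_prob_space "\<lambda>_::nat. rademacher" by unfold_locales
  interpret PI: prob_space ?P by (rule prob_space_PiM) (simp add: prob_space_rademacher)
  interpret PI': prob_space "PiM (insert i I) (\<lambda>_. rademacher)"
    by (rule prob_space_PiM) (simp add: prob_space_rademacher)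
  have upd: "x(i:=s) \<in> space (PiM (insert i I) (\<lambda>_. rademacher))" if "x \<in> space ?P" for x s
    using that by (auto simp: space_PiM PiE_def extensional_def)
  have upd_measurable: "(\<lambda>x. f (x(i:=s))) \<in> borel_measurable ?P" for s
  proof -
    have "(\<lambda>x. (x, s)) \<in> measurable ?P (?P \<Otimes>\<^sub>M rademacher)" by measurable
    from measurable_comp[OF measurable_comp[OF this measurable_add_dim] insert.prems(1)]
    show ?thesis by (simp add: comp_def)
  qed
  have upd_integral: "(\<integral>x. f (x(i:=s)) \<partial>?P) = sign_avg I (\<lambda>\<sigma>. f (\<sigma>(i:=s)))" for s
    by (rule insert.IH[OF upd_measurable insert.prems(2)[OF upd]])
  have upd_bound: "norm (f (x(i:=s))) \<le> C" if "x \<in> space ?P" for x s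
    using insert.prems(2)[OF upd[OF that]] by (simp only: real_norm_def)
  have upd_integrable: "integrable ?P (\<lambda>x. f (x(i:=s)))" for s
    using upd_bound by (intro PI.integrable_const_bound[where B=C] AE_I2 upd_measurable)
  have "integrable (PiM (insert i I) (\<lambda>_. rademacher)) f"
    using insert.prems by (intro PI'.integrable_const_bound[where B=C]) auto
  then have "(\<integral>\<sigma>. f \<sigma> \<partial>PiM (insert i I) (\<lambda>_. rademacher)) = (\<integral>x. \<integral>s. f (x(i:=s)) \<partial>rademacher \<partial>?P)"
    by (rule product_integral_insert[OF insert.hyps])
  also have "\<dots> = ((\<integral>x. f (x(i:=1)) \<partial>?P) + (\<integral>x. f (x(i:=-1)) \<partial>?P)) / 2"
    using upd_integrable by (simp add: integral_rademacher)
  also have "\<dots> = sign_avg (insert i I) f"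
    by (simp only: upd_integral sign_avg_insert[OF insert.hyps])
  finally show ?case .
qed

section \<open>McDiarmid's inequality\<close>

lemma Hoeffdings_lemma_oscillation:
  assumes "prob_space M" and f [measurable]: "f \<in> borel_measurable M"
    and bound: "\<And>y. y \<in> space M \<Longrightarrow> \<bar>f y\<bar> \<le> K"
    and osc: "\<And>y y'. y \<in> space M \<Longrightarrow> y' \<in> space M \<Longrightarrow> f y - f y' \<le> c"
    and "s > 0"
  shows "(\<integral>\<^sup>+y. ennreal (exp (s * (f y - (\<integral>y. f y \<partial>M)))) \<partial>M) \<le> ennreal (exp (s\<^sup>2 * c\<^sup>2 / 8))"
proof -
  interpret prob_space M by fact
  define a where "a = Inf (f ` space M)"
  have bdd: "bdd_below (f ` space M)"
    using bound by (force intro!: bdd_belowI[of _ "-K"] simp: abs_le_iff)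
  have "f y \<in> {a..a + c}" if y: "y \<in> space M" for y
  proof -
    have "f y - c \<le> f y'" if "y' \<in> space M" for y'
      using osc[OF y that] by linarith
    then have "f y - c \<le> a"
      unfolding a_def using not_empty by (intro cINF_greatest) auto
    then show ?thesis unfolding a_def using cINF_lower[OF bdd y] by simp
  qed
  then interpret interval_bounded_random_variable M f a "a + c"
    by unfold_locales (auto intro!: AE_I2)
  show ?thesis using Hoeffdings_lemma_nn_integral[OF \<open>s > 0\<close>] by simp
qed

locale coordinate_integration =
  fixes M :: "'a measure" and F :: "(nat \<Rightarrow> 'a) \<Rightarrow> real" and i :: nat and I :: "nat set"
    and K :: real
  assumes M: "prob_space M" and i: "i \<notin> I"
    and F [measurable]: "F \<in> borel_measurable (PiM (insert i I) (\<lambda>_. M))"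
    and bound: "\<And>x. x \<in> space (PiM (insert i I) (\<lambda>_. M)) \<Longrightarrow> \<bar>F x\<bar> \<le> K"
begin

lemma PiM_update_in_space:
  "x \<in> space (PiM I (\<lambda>_. M)) \<Longrightarrow> y \<in> space M \<Longrightarrow> x(i:=y) \<in> space (PiM (insert i I) (\<lambda>_. M))"
  by (auto simp: space_PiM PiE_def extensional_def Pi_iff)

lemma measurable_F_update:
  "x \<in> space (PiM I (\<lambda>_. M)) \<Longrightarrow> (\<lambda>y. F (x(i:=y))) \<in> borel_measurable M"
  using measurable_comp[OF measurable_component_update[OF _ i] F] by (simp add: comp_def)

lemma integrable_F_update:
  "x \<in> space (PiM I (\<lambda>_. M)) \<Longrightarrow> integrable M (\<lambda>y. F (x(i:=y)))"
  using M bound PiM_update_in_space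
  by (intro finite_measure.integrable_const_bound[where B=K] AE_I2 measurable_F_update)
     (auto intro: prob_space.finite_measure)

lemma borel_measurable_integral_F_update:
  "(\<lambda>x. \<integral>y. F (x(i:=y)) \<partial>M) \<in> borel_measurable (PiM I (\<lambda>_. M))"
proof -
  have "(\<lambda>(x, y). F (x(i:=y))) \<in> borel_measurable (PiM I (\<lambda>_. M) \<Otimes>\<^sub>M M)"
    using measurable_comp[OF measurable_add_dim F] by (simp add: comp_def case_prod_unfold)
  then show ?thesis
    by (rule sigma_finite_measure.borel_measurable_lebesgue_integral[OF prob_space_imp_sigma_finite[OF M]])
qed

lemma abs_integral_F_update_le:
  assumes x: "x \<in> space (PiM I (\<lambda>_. M))"
  shows "\<bar>\<integral>y. F (x(i:=y)) \<partial>M\<bar> \<le> K"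
proof -
  interpret prob_space M by (rule M)
  have "\<bar>\<integral>y. F (x(i:=y)) \<partial>M\<bar> \<le> (\<integral>y. \<bar>F (x(i:=y))\<bar> \<partial>M)"
    using integral_norm_bound[of M "\<lambda>y. F (x(i:=y))"] by simp
  also have "\<dots> \<le> (\<integral>y. K \<partial>M)"
    using integrable_F_update[OF x] bound[OF PiM_update_in_space[OF x]] by (intro integral_mono) auto
  finally have "\<bar>\<integral>y. F (x(i:=y)) \<partial>M\<bar> \<le> (\<integral>y. K \<partial>M)" .
  then show ?thesis by (simp add: prob_space)
qed

lemma integral_F_update_bounded_differences:
  assumes bd: "\<And>x j y y'. x \<in> space (PiM (insert i I) (\<lambda>_. M)) \<Longrightarrow> j \<in> insert i I \<Longrightarrow>
      y \<in> space M \<Longrightarrow> y' \<in> space M \<Longrightarrow> F (x(j:=y)) - F (x(j:=y')) \<le> c"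
    and x: "x \<in> space (PiM I (\<lambda>_. M))" and j: "j \<in> I" and y: "y \<in> space M" "y' \<in> space M"
  shows "(\<integral>u. F ((x(j:=y))(i:=u)) \<partial>M) - (\<integral>u. F ((x(j:=y'))(i:=u)) \<partial>M) \<le> c"
proof -
  interpret prob_space M by (rule M)
  have xj: "x(j:=y) \<in> space (PiM I (\<lambda>_. M))" "x(j:=y') \<in> space (PiM I (\<lambda>_. M))"
    using x j y by (auto simp: space_PiM PiE_def extensional_def Pi_iff)
  have swap: "(x(j:=v))(i:=u) = (x(i:=u))(j:=v)" for u v using i j by auto
  have "(\<integral>u. F ((x(j:=y))(i:=u)) \<partial>M) - (\<integral>u. F ((x(j:=y'))(i:=u)) \<partial>M)
      = (\<integral>u. F ((x(i:=u))(j:=y)) - F ((x(i:=u))(j:=y')) \<partial>M)"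
    using integrable_F_update[OF xj(1)] integrable_F_update[OF xj(2)] by (simp add: swap)
  also have "\<dots> \<le> (\<integral>u. c \<partial>M)"
    using integrable_F_update[OF xj(1)] integrable_F_update[OF xj(2)] j y
    by (intro integral_mono) (auto simp: swap intro!: bd PiM_update_in_space x)
  finally show ?thesis by (simp add: prob_space)
qed

lemma nn_integral_exp_F_update_le:
  assumes x: "x \<in> space (PiM I (\<lambda>_. M))" and s: "s > 0"
    and osc: "\<And>y y'. y \<in> space M \<Longrightarrow> y' \<in> space M \<Longrightarrow> F (x(i:=y)) - F (x(i:=y')) \<le> c"
  shows "(\<integral>\<^sup>+y. ennreal (exp (s * (F (x(i:=y)) - e))) \<partial>M)
    \<le> ennreal (exp (s * ((\<integral>y. F (x(i:=y)) \<partial>M) - e))) * ennreal (exp (s\<^sup>2 * c\<^sup>2 / 8))"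
proof -
  let ?G = "\<integral>y. F (x(i:=y)) \<partial>M"
  have "(\<integral>\<^sup>+y. ennreal (exp (s * (F (x(i:=y)) - e))) \<partial>M)
      = ennreal (exp (s * (?G - e))) * (\<integral>\<^sup>+y. ennreal (exp (s * (F (x(i:=y)) - ?G))) \<partial>M)"
    using measurable_F_update[OF x]
    by (subst nn_integral_cmult[symmetric])
       (auto intro!: nn_integral_cong simp: ennreal_mult'[symmetric] exp_add[symmetric] algebra_simps)
  also have "\<dots> \<le> ennreal (exp (s * (?G - e))) * ennreal (exp (s\<^sup>2 * c\<^sup>2 / 8))"
    using bound[OF PiM_update_in_space[OF x]] osc
    by (intro mult_left_mono Hoeffdings_lemma_oscillation[OF M measurable_F_update[OF x] _ _ s]) auto
  finally show ?thesis .
qed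

lemma integral_PiM_insert_eq:
  assumes "finite I"
  shows "(\<integral>x. F x \<partial>PiM (insert i I) (\<lambda>_. M)) = (\<integral>x. \<integral>y. F (x(i:=y)) \<partial>M \<partial>PiM I (\<lambda>_. M))"
proof -
  interpret M: prob_space M by (rule M)
  interpret product_prob_space "\<lambda>_::nat. M" by unfold_locales
  have "integrable (PiM (insert i I) (\<lambda>_. M)) F"
    using bound prob_space_PiM[of "insert i I" "\<lambda>_. M"] M
    by (intro finite_measure.integrable_const_bound[where B=K] AE_I2) (auto intro: prob_space.finite_measure)
  then show ?thesis by (rule product_integral_insert[OF assms i])
qed

end

lemma McDiarmid_mgf:
  fixes F :: "(nat \<Rightarrow> 'a) \<Rightarrow> real"
  assumes M: "prob_space M" and "finite I"
    and "F \<in> borel_measurable (PiM I (\<lambda>_. M))"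
    and "\<And>x. x \<in> space (PiM I (\<lambda>_. M)) \<Longrightarrow> \<bar>F x\<bar> \<le> K"
    and "\<And>x i y y'. x \<in> space (PiM I (\<lambda>_. M)) \<Longrightarrow> i \<in> I \<Longrightarrow> y \<in> space M \<Longrightarrow> y' \<in> space M \<Longrightarrow>
                F (x(i:=y)) - F (x(i:=y')) \<le> c"
    and s: "s > 0"
  shows "(\<integral>\<^sup>+x. ennreal (exp (s * (F x - (\<integral>x. F x \<partial>PiM I (\<lambda>_. M))))) \<partial>PiM I (\<lambda>_. M))
           \<le> ennreal (exp (s\<^sup>2 * real (card I) * c\<^sup>2 / 8))"
  using assms(2-5)
proof (induction I arbitrary: F rule: finite_induct)
  case empty
  then show ?case by (simp add: PiM_empty lebesgue_integral_count_space_finite nn_integral_count_space_finite)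
next
  case (insert i I)
  let ?P = "PiM I (\<lambda>_. M)"
  interpret M: prob_space M by (rule M)
  interpret product_prob_space "\<lambda>_::nat. M" by unfold_locales
  note F [measurable] = insert.prems(1)
  define G where "G = (\<lambda>x. \<integral>y. F (x(i:=y)) \<partial>M)"
  define EG where "EG = (\<integral>x. G x \<partial>?P)"
  interpret coordinate_integration M F i I K
    by unfold_locales (use M insert.hyps(2) insert.prems(1,2) in auto)
  have [measurable]: "G \<in> borel_measurable ?P"
    unfolding G_def by (rule borel_measurable_integral_F_update)
  have IH: "(\<integral>\<^sup>+x. ennreal (exp (s * (G x - EG))) \<partial>?P) \<le> ennreal (exp (s\<^sup>2 * real (card I) * c\<^sup>2 / 8))"
    unfolding EG_def G_def
    by (intro insert.IH borel_measurable_integral_F_update abs_integral_F_update_le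
        integral_F_update_bounded_differences[OF insert.prems(3)])
  have fibre: "(\<integral>\<^sup>+y. ennreal (exp (s * (F (x(i:=y)) - EG))) \<partial>M)
      \<le> ennreal (exp (s * (G x - EG))) * ennreal (exp (s\<^sup>2 * c\<^sup>2 / 8))"
    if x: "x \<in> space ?P" for x
    using insert.prems(3)[OF PiM_update_in_space[OF x] insertI1]
    unfolding G_def by (intro nn_integral_exp_F_update_le[OF x s]) (simp only: fun_upd_upd)
  have "(\<integral>x. F x \<partial>PiM (insert i I) (\<lambda>_. M)) = EG"
    unfolding EG_def G_def by (rule integral_PiM_insert_eq[OF insert.hyps(1)])
  then have "(\<integral>\<^sup>+x. ennreal (exp (s * (F x - (\<integral>x. F x \<partial>PiM (insert i I) (\<lambda>_. M))))) \<partial>PiM (insert i I) (\<lambda>_. M))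
      = (\<integral>\<^sup>+x. (\<integral>\<^sup>+y. ennreal (exp (s * (F (x(i:=y)) - EG))) \<partial>M) \<partial>?P)"
    by (simp only:) (rule product_nn_integral_insert[OF insert.hyps], measurable)
  also have "\<dots> \<le> ennreal (exp (s\<^sup>2 * c\<^sup>2 / 8)) * (\<integral>\<^sup>+x. ennreal (exp (s * (G x - EG))) \<partial>?P)"
    using fibre by (subst nn_integral_cmult[symmetric]) (auto intro!: nn_integral_mono simp: mult.commute)
  also have "\<dots> \<le> ennreal (exp (s\<^sup>2 * c\<^sup>2 / 8)) * ennreal (exp (s\<^sup>2 * real (card I) * c\<^sup>2 / 8))"
    by (rule mult_left_mono[OF IH]) simp
  also have "\<dots> = ennreal (exp (s\<^sup>2 * real (card (insert i I)) * c\<^sup>2 / 8))"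
    using insert.hyps by (simp add: ennreal_mult'[symmetric] exp_add[symmetric] algebra_simps add_divide_distrib)
  finally show ?case .
qed

theorem McDiarmid_inequality:
  fixes F :: "(nat \<Rightarrow> 'a) \<Rightarrow> real"
  assumes M: "prob_space M" and I: "finite I" "I \<noteq> {}"
    and F: "F \<in> borel_measurable (PiM I (\<lambda>_. M))"
    and bound: "\<And>x. x \<in> space (PiM I (\<lambda>_. M)) \<Longrightarrow> \<bar>F x\<bar> \<le> K"
    and bd: "\<And>x i y y'. x \<in> space (PiM I (\<lambda>_. M)) \<Longrightarrow> i \<in> I \<Longrightarrow> y \<in> space M \<Longrightarrow> y' \<in> space M \<Longrightarrow>
                F (x(i:=y)) - F (x(i:=y')) \<le> c"
    and c: "c > 0" and a: "a > 0"
  shows "measure (PiM I (\<lambda>_. M)) {x \<in> space (PiM I (\<lambda>_. M)). F x - (\<integral>x. F x \<partial>PiM I (\<lambda>_. M)) \<ge> a}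
           \<le> exp (- 2 * a\<^sup>2 / (real (card I) * c\<^sup>2))"
proof -
  let ?P = "PiM I (\<lambda>_. M)"
  interpret P: prob_space ?P by (rule prob_space_PiM) (simp add: M)
  define EF where "EF = (\<integral>x. F x \<partial>?P)"
  define n where "n = real (card I)"
  have n: "n > 0" unfolding n_def using I by (simp add: card_gt_0_iff)
  define s where "s = 4 * a / (n * c\<^sup>2)"
  have s: "s > 0" unfolding s_def using a c n by simp
  have "emeasure ?P {x \<in> space ?P. F x - EF \<ge> a}
      \<le> ennreal (exp (- s * a)) * (\<integral>\<^sup>+x. ennreal (exp (s * (F x - EF))) * indicator (space ?P) x \<partial>?P)"
    by (rule Chernoff_ineq_nn_integral_ge[OF s]) (use F in auto)
  also have "(\<integral>\<^sup>+x. ennreal (exp (s * (F x - EF))) * indicator (space ?P) x \<partial>?P)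
      = (\<integral>\<^sup>+x. ennreal (exp (s * (F x - EF))) \<partial>?P)"
    by (rule nn_integral_cong) auto
  also have "ennreal (exp (- s * a)) * \<dots> \<le> ennreal (exp (- s * a)) * ennreal (exp (s\<^sup>2 * n * c\<^sup>2 / 8))"
    unfolding EF_def n_def by (intro mult_left_mono McDiarmid_mgf[OF M I(1) F bound bd s]) auto
  also have "\<dots> = ennreal (exp (- 2 * a\<^sup>2 / (n * c\<^sup>2)))"
  proof -
    have "- s * a + s\<^sup>2 * n * c\<^sup>2 / 8 = - 2 * a\<^sup>2 / (n * c\<^sup>2)"
      unfolding s_def using n c by (simp add: field_simps power2_eq_square)
    then show ?thesis by (simp add: ennreal_mult'[symmetric] exp_add[symmetric])
  qed
  finally show ?thesis unfolding EF_def n_def P.emeasure_eq_measure by simp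
qed

section \<open>Symmetrization and contraction\<close>

lemma sum_insert_fun_upd:
  assumes "finite I" "i \<notin> I"
  shows "(\<Sum>j\<in>insert i I. h j ((x(i:=a)) j)) = h i a + (\<Sum>j\<in>I. h j (x j))"
proof -
  have "(\<Sum>j\<in>I. h j ((x(i:=a)) j)) = (\<Sum>j\<in>I. h j (x j))"
    by (rule sum.cong) (use assms in auto)
  then show ?thesis using assms by simp
qed

lemma sign_avg_insert_max_over_sum:
  assumes "finite I" "i \<notin> I"
  shows "sign_avg (insert i I) (\<lambda>\<sigma>. max_over D (\<lambda>w. (\<Sum>j\<in>insert i I. c * \<sigma> j * h w ((x(i:=a)) j)) + R w))
    = (\<Sum>s\<in>{1, -1}. sign_avg I (\<lambda>\<sigma>. max_over D (\<lambda>w. (\<Sum>j\<in>I. c * \<sigma> j * h w (x j)) + (c * s * h w a + R w)))) / 2"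
proof -
  have upd: "(\<Sum>j\<in>insert i I. c * (\<sigma>(i:=s)) j * h w ((x(i:=a)) j)) + R w
      = (\<Sum>j\<in>I. c * \<sigma> j * h w (x j)) + (c * s * h w a + R w)" for \<sigma> s w
  proof -
    have "(\<Sum>j\<in>I. c * (\<sigma>(i:=s)) j * h w (x j)) = (\<Sum>j\<in>I. c * \<sigma> j * h w (x j))"
      using assms(2) by (intro sum.cong) auto
    then show ?thesis
      using sum_insert_fun_upd[OF assms, of "\<lambda>j v. c * (\<sigma>(i:=s)) j * h w v"] by simp
  qed
  show ?thesis unfolding sign_avg_insert[OF assms] upd by simp
qed

lemma (in pair_sigma_finite) iterated_integral_mono:
  fixes f h :: "'a \<Rightarrow> 'b \<Rightarrow> real"
  assumes f: "integrable (M1 \<Otimes>\<^sub>M M2) (\<lambda>(x, y). f x y)"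
    and h: "integrable (M1 \<Otimes>\<^sub>M M2) (\<lambda>(x, y). h x y)"
    and le: "\<And>y. y \<in> space M2 \<Longrightarrow> (\<integral>x. f x y \<partial>M1) \<le> (\<integral>x. h x y \<partial>M1)"
  shows "(\<integral>x. \<integral>y. f x y \<partial>M2 \<partial>M1) \<le> (\<integral>x. \<integral>y. h x y \<partial>M2 \<partial>M1)"
proof -
  have "(\<integral>x. \<integral>y. f x y \<partial>M2 \<partial>M1) = (\<integral>y. \<integral>x. f x y \<partial>M1 \<partial>M2)"
    by (rule Fubini_integral[OF f, symmetric])
  also have "\<dots> \<le> (\<integral>y. \<integral>x. h x y \<partial>M1 \<partial>M2)"
    by (rule integral_mono[OF integrable_snd[OF f] integrable_snd[OF h] le])
  also have "\<dots> = (\<integral>x. \<integral>y. h x y \<partial>M2 \<partial>M1)"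
    by (rule Fubini_integral[OF h])
  finally show ?thesis .
qed

locale symmetrization =
  fixes M :: "'a measure" and D :: "'w set" and g :: "'w \<Rightarrow> 'a \<Rightarrow> real" and K :: real
  assumes M: "prob_space M" and D: "finite D" "D \<noteq> {}"
    and g [measurable]: "\<And>w. g w \<in> borel_measurable M"
    and g_bound: "\<And>w a. w \<in> D \<Longrightarrow> a \<in> space M \<Longrightarrow> \<bar>g w a\<bar> \<le> K"
begin

interpretation M: prob_space M by (rule M)
interpretation product_prob_space "\<lambda>_::nat. M" by unfold_locales

definition mean :: "'w \<Rightarrow> real" where
  "mean w = (\<integral>a. g w a \<partial>M)"

lemma prob_space_PiM_M: "prob_space (PiM I (\<lambda>_. M))"
  by (rule prob_space_PiM) (simp add: M)

lemma pair_prob_space_PiM_M: "pair_prob_space (PiM I (\<lambda>_. M)) M"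
  using prob_space_PiM_M M
  by (intro pair_prob_space.intro pair_sigma_finite.intro) (auto intro: prob_space_imp_sigma_finite)

lemma integrable_g: "w \<in> D \<Longrightarrow> integrable M (g w)"
  using g_bound by (intro M.integrable_const_bound[where B=K] AE_I2) auto

lemma integrable_g_component:
  assumes "j \<in> I" "w \<in> D"
  shows "integrable (PiM I (\<lambda>_. M)) (\<lambda>x. g w (x j))"
proof -
  interpret prob_space "PiM I (\<lambda>_. M)" by (rule prob_space_PiM_M)
  show ?thesis
    using assms g_bound by (intro integrable_const_bound[where B=K] AE_I2) (auto simp: space_PiM)
qed

lemma integrable_g_fst_component:
  assumes "j \<in> I" "w \<in> D"
  shows "integrable (PiM I (\<lambda>_. M) \<Otimes>\<^sub>M M) (\<lambda>p. g w (fst p j))"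
proof -
  interpret PIM: pair_prob_space "PiM I (\<lambda>_. M)" M by (rule pair_prob_space_PiM_M)
  show ?thesis
    using assms g_bound by (intro PIM.P.integrable_const_bound[where B=K] AE_I2)
      (auto simp: space_pair_measure space_PiM PiE_def Pi_iff)
qed

lemma integrable_g_snd:
  assumes "w \<in> D"
  shows "integrable (PiM I (\<lambda>_. M) \<Otimes>\<^sub>M M) (\<lambda>p. g w (snd p))"
proof -
  interpret PIM: pair_prob_space "PiM I (\<lambda>_. M)" M by (rule pair_prob_space_PiM_M)
  show ?thesis
    using assms g_bound by (intro PIM.P.integrable_const_bound[where B=K] AE_I2) (auto simp: space_pair_measure)
qed

lemmas integrable_linear_intros = Bochner_Integration.integrable_add Bochner_Integration.integrable_sum
  Bochner_Integration.integrable_diff integrable_mult_right integrable_divide integrable_max_over[OF D]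
  integrable_sign_avg integrable_g_component integrable_g_fst_component integrable_g_snd

text \<open>The one-sample case: the centred term is replaced by an independent copy of itself and the
  two orders of the pair are averaged.\<close>
lemma symmetrization_one_sample:
  "(\<integral>a. max_over D (\<lambda>w. mean w - g w a + Q w) \<partial>M)
     \<le> (\<integral>a. (max_over D (\<lambda>w. 2 * g w a + Q w) + max_over D (\<lambda>w. - 2 * g w a + Q w)) / 2 \<partial>M)"
proof -
  have int: "integrable M (\<lambda>a. max_over D (\<lambda>w. c * g w a + Q w))" for c
    using integrable_g by (intro integrable_max_over[OF D]) auto
  have split: "max_over D (\<lambda>w. mean w - g w a + Q w)
      \<le> (max_over D (\<lambda>w. 2 * mean w + Q w) + max_over D (\<lambda>w. - 2 * g w a + Q w)) / 2" for a
  proof -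
    have "max_over D (\<lambda>w. mean w - g w a + Q w)
        = max_over D (\<lambda>w. (1/2) * (2 * mean w + Q w) + (1/2) * (- 2 * g w a + Q w))"
      by (simp add: algebra_simps)
    also have "\<dots> \<le> max_over D (\<lambda>w. (1/2) * (2 * mean w + Q w)) + max_over D (\<lambda>w. (1/2) * (- 2 * g w a + Q w))"
      by (rule max_over_add_le[OF D])
    also have "\<dots> = (max_over D (\<lambda>w. 2 * mean w + Q w) + max_over D (\<lambda>w. - 2 * g w a + Q w)) / 2"
      using max_over_mult_left[OF D, of "1/2" "\<lambda>w. 2 * mean w + Q w"]
        max_over_mult_left[OF D, of "1/2" "\<lambda>w. - 2 * g w a + Q w"]
      by simp
    finally show ?thesis .
  qed
  have mean_le: "max_over D (\<lambda>w. 2 * mean w + Q w) \<le> (\<integral>b. max_over D (\<lambda>w. 2 * g w b + Q w) \<partial>M)"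
  proof -
    have "max_over D (\<lambda>w. 2 * mean w + Q w) = max_over D (\<lambda>w. \<integral>b. 2 * g w b + Q w \<partial>M)"
      using integrable_g by (intro max_over_cong[OF D]) (simp add: mean_def M.prob_space)
    also have "\<dots> \<le> (\<integral>b. max_over D (\<lambda>w. 2 * g w b + Q w) \<partial>M)"
      using integrable_g by (intro max_over_integral_le[OF D]) auto
    finally show ?thesis .
  qed
  have "(\<integral>a. max_over D (\<lambda>w. mean w - g w a + Q w) \<partial>M)
      \<le> (\<integral>a. (max_over D (\<lambda>w. 2 * mean w + Q w) + max_over D (\<lambda>w. - 2 * g w a + Q w)) / 2 \<partial>M)"
    using int[of "-2"] integrable_g by (intro integral_mono split integrable_max_over[OF D]) auto
  also have "\<dots> = (max_over D (\<lambda>w. 2 * mean w + Q w) + (\<integral>a. max_over D (\<lambda>w. - 2 * g w a + Q w) \<partial>M)) / 2"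
    using int[of "-2"] by (simp add: M.prob_space)
  also have "\<dots> \<le> (\<integral>a. (max_over D (\<lambda>w. 2 * g w a + Q w) + max_over D (\<lambda>w. - 2 * g w a + Q w)) / 2 \<partial>M)"
    using mean_le int[of "-2"] int[of 2] by simp
  finally show ?thesis .
qed

lemma symmetrization_insert:
  assumes I: "finite I" "i \<notin> I"
  shows "(\<integral>x. max_over D (\<lambda>w. (\<Sum>j\<in>insert i I. mean w - g w (x j)) + R w) \<partial>PiM (insert i I) (\<lambda>_. M))
    \<le> (\<integral>x. \<integral>a. (\<Sum>s\<in>{1, -1}. max_over D (\<lambda>w. (\<Sum>j\<in>I. mean w - g w (x j)) + (2 * s * g w a + R w))) / 2
          \<partial>M \<partial>PiM I (\<lambda>_. M))"
proof -
  let ?P = "PiM I (\<lambda>_. M)"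
  interpret PI': prob_space "PiM (insert i I) (\<lambda>_. M)" by (rule prob_space_PiM_M)
  interpret PIM: pair_prob_space ?P M by (rule pair_prob_space_PiM_M)
  define Q where "Q x w = (\<Sum>j\<in>I. mean w - g w (x j)) + R w" for x w
  have "integrable (PiM (insert i I) (\<lambda>_. M)) (\<lambda>x. max_over D (\<lambda>w. (\<Sum>j\<in>insert i I. mean w - g w (x j)) + R w))"
    by (intro integrable_linear_intros PI'.integrable_const finite.insertI I; assumption)
  then have "(\<integral>x. max_over D (\<lambda>w. (\<Sum>j\<in>insert i I. mean w - g w (x j)) + R w) \<partial>PiM (insert i I) (\<lambda>_. M))
      = (\<integral>x. \<integral>a. max_over D (\<lambda>w. (\<Sum>j\<in>insert i I. mean w - g w ((x(i:=a)) j)) + R w) \<partial>M \<partial>?P)"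
    by (rule product_integral_insert[OF I])
  also have "\<dots> = (\<integral>x. \<integral>a. max_over D (\<lambda>w. mean w - g w a + Q x w) \<partial>M \<partial>?P)"
    using sum_insert_fun_upd[OF I, where h="\<lambda>j v. mean w - g w v" for w] by (simp add: Q_def add.assoc)
  also have "\<dots> \<le> (\<integral>x. \<integral>a. (\<Sum>s\<in>{1, -1}. max_over D (\<lambda>w. 2 * s * g w a + Q x w)) / 2 \<partial>M \<partial>?P)"
  proof (rule integral_mono[OF PIM.integrable_fst PIM.integrable_fst])
    show "integrable (?P \<Otimes>\<^sub>M M) (\<lambda>(x, a). max_over D (\<lambda>w. mean w - g w a + Q x w))"
      and "integrable (?P \<Otimes>\<^sub>M M) (\<lambda>(x, a). (\<Sum>s\<in>{1, -1}. max_over D (\<lambda>w. 2 * s * g w a + Q x w)) / 2)"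
      unfolding Q_def case_prod_unfold
      by (intro integrable_linear_intros PIM.P.integrable_const I; assumption)+
  qed (rule order.trans[OF symmetrization_one_sample], simp)
  finally show ?thesis by (simp add: Q_def algebra_simps)
qed

lemma symmetrization:
  assumes "finite I"
  shows "(\<integral>x. max_over D (\<lambda>w. (\<Sum>j\<in>I. mean w - g w (x j)) + R w) \<partial>PiM I (\<lambda>_. M))
    \<le> (\<integral>x. sign_avg I (\<lambda>\<sigma>. max_over D (\<lambda>w. (\<Sum>j\<in>I. 2 * \<sigma> j * g w (x j)) + R w)) \<partial>PiM I (\<lambda>_. M))"
  using assms
proof (induction I arbitrary: R rule: finite_induct)
  case empty
  show ?case by (simp add: PiM_empty lebesgue_integral_count_space_finite sign_avg_empty)
next
  case (insert i I)
  let ?P = "PiM I (\<lambda>_. M)" and ?P' = "PiM (insert i I) (\<lambda>_. M)"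
  interpret PI: prob_space ?P by (rule prob_space_PiM_M)
  interpret PI': prob_space ?P' by (rule prob_space_PiM_M)
  interpret PIM: pair_prob_space ?P M by (rule pair_prob_space_PiM_M)
  define F where "F s a x = max_over D (\<lambda>w. (\<Sum>j\<in>I. mean w - g w (x j)) + (2 * s * g w a + R w))"
    for s :: real and a x
  define G where "G s a x = sign_avg I (\<lambda>\<sigma>. max_over D (\<lambda>w. (\<Sum>j\<in>I. 2 * \<sigma> j * g w (x j)) + (2 * s * g w a + R w)))"
    for s :: real and a x
  have "(\<integral>x. max_over D (\<lambda>w. (\<Sum>j\<in>insert i I. mean w - g w (x j)) + R w) \<partial>?P')
      \<le> (\<integral>x. \<integral>a. (\<Sum>s\<in>{1, -1}. F s a x) / 2 \<partial>M \<partial>?P)"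
    unfolding F_def by (rule symmetrization_insert[OF insert.hyps])
  also have "\<dots> \<le> (\<integral>x. \<integral>a. (\<Sum>s\<in>{1, -1}. G s a x) / 2 \<partial>M \<partial>?P)"
  proof (rule PIM.iterated_integral_mono)
    show "integrable (?P \<Otimes>\<^sub>M M) (\<lambda>(x, a). (\<Sum>s\<in>{1, -1}. F s a x) / 2)"
      and "integrable (?P \<Otimes>\<^sub>M M) (\<lambda>(x, a). (\<Sum>s\<in>{1, -1}. G s a x) / 2)"
      unfolding F_def G_def case_prod_unfold
      by (intro integrable_linear_intros PIM.P.integrable_const insert.hyps; assumption)+
    have "integrable ?P (F s a)" "integrable ?P (G s a)" for s a
      unfolding F_def G_def by (intro integrable_linear_intros PI.integrable_const insert.hyps; assumption)+
    moreover have "(\<integral>x. F s a x \<partial>?P) \<le> (\<integral>x. G s a x \<partial>?P)" for s a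
      unfolding F_def G_def by (rule insert.IH)
    ultimately show "(\<integral>x. (\<Sum>s\<in>{1, -1}. F s a x) / 2 \<partial>?P) \<le> (\<integral>x. (\<Sum>s\<in>{1, -1}. G s a x) / 2 \<partial>?P)" for a
      by (simp add: add_mono)
  qed
  also have "\<dots> = (\<integral>x. \<integral>a. sign_avg (insert i I)
      (\<lambda>\<sigma>. max_over D (\<lambda>w. (\<Sum>j\<in>insert i I. 2 * \<sigma> j * g w ((x(i:=a)) j)) + R w)) \<partial>M \<partial>?P)"
    unfolding G_def sign_avg_insert_max_over_sum[OF insert.hyps] ..
  also have "\<dots> = (\<integral>x. sign_avg (insert i I) (\<lambda>\<sigma>. max_over D (\<lambda>w. (\<Sum>j\<in>insert i I. 2 * \<sigma> j * g w (x j)) + R w)) \<partial>?P')"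
    by (rule product_integral_insert[OF insert.hyps, symmetric])
       (intro integrable_linear_intros PI'.integrable_const finite.insertI insert.hyps; assumption)
  finally show ?case .
qed

end

context
  fixes D :: "'w set" and \<phi> :: "real \<Rightarrow> real"
  assumes D: "finite D" "D \<noteq> {}"
    and lip: "\<And>u v. \<bar>\<phi> u - \<phi> v\<bar> \<le> \<bar>u - v\<bar>"
begin

lemma contraction_one_sign:
  "max_over D (\<lambda>w. Q w + \<phi> (t w)) + max_over D (\<lambda>w. Q w - \<phi> (t w))
    \<le> max_over D (\<lambda>w. Q w + t w) + max_over D (\<lambda>w. Q w - t w)"
proof -
  obtain w1 where w1: "w1 \<in> D" "max_over D (\<lambda>w. Q w + \<phi> (t w)) = Q w1 + \<phi> (t w1)"
    by (rule max_over_attained[OF D])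
  obtain w2 where w2: "w2 \<in> D" "max_over D (\<lambda>w. Q w - \<phi> (t w)) = Q w2 - \<phi> (t w2)"
    by (rule max_over_attained[OF D])
  have lip12: "\<phi> (t w1) - \<phi> (t w2) \<le> \<bar>t w1 - t w2\<bar>" using lip[of "t w1" "t w2"] by linarith
  have "Q w1 + t w1 \<le> max_over D (\<lambda>w. Q w + t w)" "Q w2 - t w2 \<le> max_over D (\<lambda>w. Q w - t w)"
    "Q w2 + t w2 \<le> max_over D (\<lambda>w. Q w + t w)" "Q w1 - t w1 \<le> max_over D (\<lambda>w. Q w - t w)"
    using w1(1) w2(1) by (auto intro!: max_over_ge[OF D])
  moreover have "\<phi> (t w1) - \<phi> (t w2) \<le> t w1 - t w2 \<or> \<phi> (t w1) - \<phi> (t w2) \<le> t w2 - t w1"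
    using lip12 by linarith
  ultimately show ?thesis unfolding w1(2) w2(2) by linarith
qed

text \<open>The Ledoux--Talagrand contraction principle for a 1-Lipschitz \<open>\<phi>\<close>.\<close>
lemma contraction:
  assumes "finite I"
  shows "sign_avg I (\<lambda>\<sigma>. max_over D (\<lambda>w. (\<Sum>j\<in>I. \<sigma> j * \<phi> (t j w)) + R w))
      \<le> sign_avg I (\<lambda>\<sigma>. max_over D (\<lambda>w. (\<Sum>j\<in>I. \<sigma> j * t j w) + R w))"
  using assms
proof (induction I arbitrary: R rule: finite_induct)
  case empty
  then show ?case by (simp add: sign_avg_empty)
next
  case (insert i I)
  define A where "A h \<sigma> w = (\<Sum>j\<in>I. \<sigma> j * h j w) + R w" for h \<sigma> w
  have upd: "(\<Sum>j\<in>insert i I. (\<sigma>(i:=s)) j * h j w) + R w = A h \<sigma> w + s * h i w" for \<sigma> s h w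
  proof -
    have "(\<Sum>j\<in>I. (\<sigma>(i:=s)) j * h j w) = (\<Sum>j\<in>I. \<sigma> j * h j w)"
      using insert.hyps(2) by (intro sum.cong) auto
    then show ?thesis using insert.hyps unfolding A_def by simp
  qed
  let ?\<phi>t = "\<lambda>j w. \<phi> (t j w)"
  have "sign_avg (insert i I) (\<lambda>\<sigma>. max_over D (\<lambda>w. (\<Sum>j\<in>insert i I. \<sigma> j * \<phi> (t j w)) + R w))
      = (sign_avg I (\<lambda>\<sigma>. max_over D (\<lambda>w. A ?\<phi>t \<sigma> w + \<phi> (t i w)))
        + sign_avg I (\<lambda>\<sigma>. max_over D (\<lambda>w. A ?\<phi>t \<sigma> w - \<phi> (t i w)))) / 2"
    unfolding sign_avg_insert[OF insert.hyps] upd[of _ _ ?\<phi>t] by simp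
  also have "\<dots> \<le> (sign_avg I (\<lambda>\<sigma>. max_over D (\<lambda>w. A ?\<phi>t \<sigma> w + t i w))
      + sign_avg I (\<lambda>\<sigma>. max_over D (\<lambda>w. A ?\<phi>t \<sigma> w - t i w))) / 2"
    unfolding sign_avg_add[symmetric]
    by (intro divide_right_mono sign_avg_mono[OF insert.hyps(1)] contraction_one_sign) simp
  also have "\<dots> \<le> (sign_avg I (\<lambda>\<sigma>. max_over D (\<lambda>w. A t \<sigma> w + t i w))
      + sign_avg I (\<lambda>\<sigma>. max_over D (\<lambda>w. A t \<sigma> w - t i w))) / 2"
    using insert.IH[of "\<lambda>w. R w + t i w"] insert.IH[of "\<lambda>w. R w - t i w"]
    unfolding A_def add.assoc add_diff_eq by (intro divide_right_mono add_mono) auto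
  also have "\<dots> = sign_avg (insert i I) (\<lambda>\<sigma>. max_over D (\<lambda>w. (\<Sum>j\<in>insert i I. \<sigma> j * t j w) + R w))"
    unfolding sign_avg_insert[OF insert.hyps] upd by simp
  finally show ?case .
qed

end

section \<open>The learning setting\<close>

lemma pos_part_nonneg: "0 \<le> pos_part t"
  unfolding pos_part_def by simp

lemma pos_part_lipschitz: "\<bar>pos_part s - pos_part t\<bar> \<le> \<bar>s - t\<bar>"
  unfolding pos_part_def by linarith

lemma abs_sum_mult_le:
  assumes "(\<Sum>j\<in>J. \<bar>\<alpha> j\<bar>) \<le> a" "\<And>j. j \<in> J \<Longrightarrow> \<bar>c j\<bar> \<le> C" "0 \<le> C"
  shows "\<bar>\<Sum>j\<in>J. \<alpha> j * c j\<bar> \<le> a * (C::real)"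
proof -
  have "\<bar>\<Sum>j\<in>J. \<alpha> j * c j\<bar> \<le> (\<Sum>j\<in>J. \<bar>\<alpha> j\<bar> * C)"
    by (rule order.trans[OF sum_abs sum_mono]) (use assms(2) in \<open>auto simp: abs_mult intro: mult_left_mono\<close>)
  also have "\<dots> \<le> a * C" by (simp add: sum_distrib_right[symmetric] mult_right_mono assms(1,3))
  finally show ?thesis .
qed

lemma measurable_PiM_fst_component:
  "i \<in> I \<Longrightarrow> f \<in> measurable M K \<Longrightarrow> (\<lambda>p. f (fst p i)) \<in> measurable (PiM I (\<lambda>_. M) \<Otimes>\<^sub>M N) K"
  by (rule measurable_compose[OF measurable_compose[OF measurable_fst measurable_component_singleton]])

lemma measurable_PiM_snd_component:
  "i \<in> I \<Longrightarrow> f \<in> measurable M K \<Longrightarrow> (\<lambda>p. f (snd p i)) \<in> measurable (N \<Otimes>\<^sub>M PiM I (\<lambda>_. M)) K"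
  by (rule measurable_compose[OF measurable_compose[OF measurable_snd measurable_component_singleton]])

lemma hinge_contraction_lipschitz: "\<bar>2 * pos_part (1 - u / 2) - 2 * pos_part (1 - v / 2)\<bar> \<le> \<bar>u - v\<bar>"
  unfolding pos_part_def by (auto simp: max_def abs_if)

locale similarity_learning =
  fixes X :: "(real^'d) set"
    and \<rho> :: "((real^'d) \<times> real) measure"
    and m :: nat and r lam :: real
    and N :: "real^'d^'d \<Rightarrow> real"
    and Az :: "(nat \<Rightarrow> (real^'d) \<times> real) \<Rightarrow> real^'d^'d"
    and fz :: "(nat \<Rightarrow> (real^'d) \<times> real) \<Rightarrow> (real^'d \<Rightarrow> real)"
  assumes m_pos: "m \<ge> 1"
    and X_open: "open X" and X_bounded: "bounded X" and X_nonempty: "X \<noteq> {}"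
    and rho_prob: "prob_space \<rho>" and rho_sets: "sets \<rho> = sets borel"
    and rho_supp: "AE zz in \<rho>. zz \<in> X \<times> {-1, 1}"
    and r_pos: "r > 0" and lam_pos: "lam > 0"
    and N_norm: "is_matrix_norm N"
    and Az_min: "\<And>z. transpose (Az z) = Az z \<and>
        (\<forall>A. transpose A = A \<longrightarrow>
           emp_err_A m r z (Az z) + lam * N (Az z) \<le> emp_err_A m r z A + lam * N A)"
    and fz_min: "\<And>z. fz z \<in> hyp_space m r z (Az z) \<and>
        (\<forall>f \<in> hyp_space m r z (Az z). emp_hinge m z (fz z) \<le> emp_hinge m z f)"
begin

interpretation \<rho>: prob_space \<rho> by (rule rho_prob)

definition radius :: real where
  "radius = (SOME R. R > 0 \<and> (\<forall>x\<in>X. norm x \<le> R))"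

lemma radius_pos: "radius > 0" and norm_le_radius: "x \<in> X \<Longrightarrow> norm x \<le> radius"
proof -
  have "\<exists>R. R > 0 \<and> (\<forall>x\<in>X. norm x \<le> R)" using X_bounded bounded_pos by blast
  from someI_ex[OF this] show "radius > 0" "x \<in> X \<Longrightarrow> norm x \<le> radius"
    unfolding radius_def by auto
qed

definition dual_const :: real where
  "dual_const = (SOME C. C > 0 \<and> (\<forall>B. dual_norm N B \<le> C * norm B))"

lemma dual_const_pos: "dual_const > 0" and dual_norm_le_dual_const: "dual_norm N B \<le> dual_const * norm B"
  using someI_ex[OF dual_norm_le_norm[OF N_norm]] unfolding dual_const_def by auto

lemma dual_norm_outer_le:
  assumes "x \<in> X"
  shows "dual_norm N (outer v x) \<le> dual_const * radius * norm v"
proof -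
  have "dual_norm N (outer v x) \<le> dual_const * (norm x * norm v)"
    using dual_norm_le_dual_const[of "outer v x"] by (simp add: norm_outer mult.commute)
  also have "\<dots> \<le> dual_const * (radius * norm v)"
    using norm_le_radius[OF assms] dual_const_pos by (intro mult_left_mono mult_right_mono) auto
  finally show ?thesis by (simp add: mult.assoc)
qed

definition base_point :: "real^'d" where
  "base_point = (SOME x. x \<in> X)"

lemma base_point_in_X: "base_point \<in> X"
  unfolding base_point_def using X_nonempty by (simp add: some_in_eq)

definition support :: "((real^'d) \<times> real) set" where
  "support = X \<times> {-1, 1}"

text \<open>Outside the support of \<open>\<rho>\<close> a sample point is replaced by a fixed point of the support, so
  that losses are bounded everywhere, not only almost everywhere.\<close>
definition proj_support :: "(real^'d) \<times> real \<Rightarrow> (real^'d) \<times> real" where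
  "proj_support a = (if a \<in> support then a else (base_point, 1))"

lemma proj_support_in: "proj_support a \<in> support"
  unfolding proj_support_def support_def using base_point_in_X by auto

lemma proj_support_fst: "fst (proj_support a) \<in> X"
  and abs_proj_support_snd: "\<bar>snd (proj_support a)\<bar> = 1"
  using proj_support_in[of a] unfolding support_def by auto

definition loss :: "real^'d \<Rightarrow> (real^'d) \<times> real \<Rightarrow> real" where
  "loss w a = pos_part (1 - snd (proj_support a) * (w \<bullet> fst (proj_support a)))"

definition dual_sup :: "real^'d \<Rightarrow> real" where
  "dual_sup v = Sup ((\<lambda>x. dual_norm N (outer v x)) ` X)"

lemma dual_sup_bdd: "bdd_above ((\<lambda>x. dual_norm N (outer v x)) ` X)"
  using dual_norm_outer_le by (intro bdd_aboveI2) auto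

lemma dual_sup_ge: "x \<in> X \<Longrightarrow> dual_norm N (outer v x) \<le> dual_sup v"
  unfolding dual_sup_def by (rule cSup_upper[OF _ dual_sup_bdd]) auto

lemma dual_sup_le: "dual_sup v \<le> dual_const * radius * norm v"
  unfolding dual_sup_def using X_nonempty dual_norm_outer_le by (intro cSup_least) auto

lemma dual_sup_nonneg: "0 \<le> dual_sup v"
  using dual_sup_ge[OF base_point_in_X, of v] dual_norm_nonneg[OF N_norm, of "outer v base_point"]
  by linarith

lemma dual_sup_lipschitz: "\<bar>dual_sup v - dual_sup v'\<bar> \<le> dual_const * radius * norm (v - v')"
proof -
  have "dual_sup v \<le> dual_sup v' + dual_const * radius * norm (v - v')" for v v'
    unfolding dual_sup_def[of v]
  proof (rule cSup_least)
    show "(\<lambda>x. dual_norm N (outer v x)) ` X \<noteq> {}" using X_nonempty by auto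
    fix t assume "t \<in> (\<lambda>x. dual_norm N (outer v x)) ` X"
    then obtain x where x: "x \<in> X" "t = dual_norm N (outer v x)" by auto
    have "dual_norm N (outer v x) \<le> dual_norm N (outer v' x) + dual_norm N (outer (v - v') x)"
      using dual_norm_triangle[OF N_norm, of "outer v' x" "outer (v - v') x"]
      by (simp add: outer_diff_left[symmetric])
    then show "t \<le> dual_sup v' + dual_const * radius * norm (v - v')"
      using x dual_sup_ge[OF x(1), of v'] dual_norm_outer_le[OF x(1), of "v - v'"] by linarith
  qed
  from this[of v v'] this[of v' v] show ?thesis by (simp add: norm_minus_commute abs_le_iff)
qed

lemma continuous_dual_sup: "continuous_on UNIV dual_sup"
  by (rule lipschitz_on_continuous_on[of "dual_const * radius"])
     (use dual_sup_lipschitz dual_const_pos radius_pos in \<open>auto simp: lipschitz_on_def dist_norm\<close>)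

lemma Xstar_bdd: "bdd_above {dual_norm N (outer x' x) | x x'. x \<in> X \<and> x' \<in> X}"
proof (rule bdd_aboveI)
  fix t assume "t \<in> {dual_norm N (outer x' x) | x x'. x \<in> X \<and> x' \<in> X}"
  then obtain x x' where x: "x \<in> X" "x' \<in> X" "t = dual_norm N (outer x' x)" by auto
  have "dual_const * radius * norm x' \<le> dual_const * radius * radius"
    using norm_le_radius[OF x(2)] dual_const_pos radius_pos by simp
  then show "t \<le> dual_const * radius * radius" using dual_norm_outer_le[OF x(1), of x'] x(3) by linarith
qed

lemma dual_norm_outer_le_Xstar: "x \<in> X \<Longrightarrow> x' \<in> X \<Longrightarrow> dual_norm N (outer x' x) \<le> Xstar N X"
  unfolding Xstar_def by (rule cSup_upper[OF _ Xstar_bdd]) auto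

lemma Xstar_nonneg: "0 \<le> Xstar N X"
  using dual_norm_outer_le_Xstar[OF base_point_in_X base_point_in_X] dual_norm_nonneg[OF N_norm]
  by (meson order.trans)

definition value_bound :: real where
  "value_bound = Xstar N X / (lam * r)"

lemma value_bound_nonneg: "0 \<le> value_bound"
  unfolding value_bound_def using Xstar_nonneg r_pos lam_pos by simp

text \<open>Every learned hypothesis \<open>f\<^sub>z\<close> is a linear functional with weight vector in \<open>weights\<close>; the
  second condition is what links the complexity of this class to \<open>\<R>\<^sub>m\<close>.\<close>
definition weights :: "(real^'d) set" where
  "weights = {w. (\<forall>x\<in>X. \<bar>w \<bullet> x\<bar> \<le> value_bound) \<and> (\<forall>v. w \<bullet> v \<le> dual_sup v / (lam * r))}"

lemma weights_value_bound: "w \<in> weights \<Longrightarrow> x \<in> X \<Longrightarrow> \<bar>w \<bullet> x\<bar> \<le> value_bound"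
  and weights_dual_sup: "w \<in> weights \<Longrightarrow> w \<bullet> v \<le> dual_sup v / (lam * r)"
  unfolding weights_def by auto

lemma zero_in_weights: "0 \<in> weights"
  unfolding weights_def using value_bound_nonneg dual_sup_nonneg lam_pos r_pos by auto

lemma closed_weights: "closed weights"
proof -
  have "weights = (\<Inter>x\<in>X. {w. \<bar>w \<bullet> x\<bar> \<le> value_bound}) \<inter> (\<Inter>v. {w. w \<bullet> v \<le> dual_sup v / (lam * r)})"
    unfolding weights_def by auto
  also have "closed \<dots>"
    by (intro closed_Int closed_INT ballI closed_Collect_le continuous_intros)
  finally show ?thesis .
qed

text \<open>Boundedness uses that \<open>X\<close> is open: it contains a ball around \<open>base_point\<close>.\<close>
lemma bounded_weights: "bounded weights"
proof -
  obtain e where e: "e > 0" "ball base_point e \<subseteq> X"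
    using X_open base_point_in_X open_contains_ball by blast
  have "norm w \<le> 4 * value_bound / e" if w: "w \<in> weights" for w
  proof (cases "w = 0")
    case False
    define u where "u = (e / 2 / norm w) *\<^sub>R w"
    have "norm u = e / 2" using False e unfolding u_def by simp
    then have "base_point + u \<in> X" using e by (intro subsetD[OF e(2)]) (simp add: dist_norm)
    then have "\<bar>w \<bullet> (base_point + u)\<bar> \<le> value_bound" by (rule weights_value_bound[OF w])
    moreover have "\<bar>w \<bullet> base_point\<bar> \<le> value_bound" by (rule weights_value_bound[OF w base_point_in_X])
    moreover have "w \<bullet> u = e / 2 * norm w"
      unfolding u_def using False by (simp add: power2_norm_eq_inner[symmetric] power2_eq_square)
    ultimately have "e / 2 * norm w \<le> 2 * value_bound" by (simp add: inner_add_right abs_le_iff)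
    then show ?thesis using e by (simp add: field_simps)
  qed (use value_bound_nonneg e in simp)
  then show ?thesis unfolding bounded_iff by blast
qed

lemma finite_net_weights:
  assumes "\<eta> > 0"
  obtains D where "finite D" "D \<subseteq> weights" "D \<noteq> {}" "\<And>w. w \<in> weights \<Longrightarrow> \<exists>d\<in>D. norm (w - d) < \<eta>"
proof -
  have "compact weights" using closed_weights bounded_weights by (simp add: compact_eq_bounded_closed)
  moreover have "weights \<subseteq> (\<Union>c\<in>weights. ball c \<eta>)" using assms by auto
  ultimately obtain D where D: "D \<subseteq> weights" "finite D" "weights \<subseteq> (\<Union>c\<in>D. ball c \<eta>)"
    by (elim compactE_image) auto
  moreover have "\<exists>d\<in>D. norm (w - d) < \<eta>" if "w \<in> weights" for w
    using D(3) that by (force simp: dist_norm norm_minus_commute)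
  moreover have "D \<noteq> {}" using D(3) zero_in_weights by auto
  ultimately show ?thesis using that by blast
qed

lemma abs_margin_le_value_bound:
  "w \<in> weights \<Longrightarrow> \<bar>snd (proj_support a) * (w \<bullet> fst (proj_support a))\<bar> \<le> value_bound"
  using weights_value_bound[OF _ proj_support_fst] abs_proj_support_snd by (simp add: abs_mult)

lemma loss_bounds: "w \<in> weights \<Longrightarrow> 0 \<le> loss w a \<and> loss w a \<le> 1 + value_bound"
  using abs_margin_le_value_bound[of w a] unfolding loss_def pos_part_def by auto

lemma loss_diff_le: "w \<in> weights \<Longrightarrow> loss w a - loss w b \<le> 2 * value_bound"
  using abs_margin_le_value_bound[of w a] abs_margin_le_value_bound[of w b]
  unfolding loss_def pos_part_def by linarith

lemma loss_lipschitz: "\<bar>loss w a - loss w' a\<bar> \<le> radius * norm (w - w')"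
proof -
  let ?s = "snd (proj_support a)" and ?x = "fst (proj_support a)"
  have "\<bar>loss w a - loss w' a\<bar> \<le> \<bar>(1 - ?s * (w \<bullet> ?x)) - (1 - ?s * (w' \<bullet> ?x))\<bar>"
    unfolding loss_def by (rule pos_part_lipschitz)
  also have "\<dots> = \<bar>(w - w') \<bullet> ?x\<bar>"
    using abs_proj_support_snd[of a] by (simp add: abs_mult inner_diff_left right_diff_distrib[symmetric])
  also have "\<dots> \<le> norm (w - w') * norm (fst (proj_support a))" by (rule Cauchy_Schwarz_ineq2)
  also have "\<dots> \<le> norm (w - w') * radius" using norm_le_radius[OF proj_support_fst] by (simp add: mult_left_mono)
  finally show ?thesis by (simp add: mult.commute)
qed

lemma support_sets: "support \<in> sets \<rho>"
proof -
  have "X \<times> {-1, 1::real} \<in> sets (borel \<Otimes>\<^sub>M borel)"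
    by (rule pair_measureI) (auto intro: borel_open[OF X_open])
  then show ?thesis unfolding rho_sets borel_prod support_def .
qed

lemma measurable_proj_support [measurable]: "proj_support \<in> measurable \<rho> (borel :: ((real^'d) \<times> real) measure)"
proof -
  have "(\<lambda>a. a) \<in> measurable \<rho> (borel :: ((real^'d) \<times> real) measure)"
    by (simp add: measurable_cong_sets[OF rho_sets refl])
  then show ?thesis
    unfolding proj_support_def by (rule measurable_If_set) (use support_sets in auto)
qed

lemma borel_measurable_fst_proj_support [measurable]: "(\<lambda>a. fst (proj_support a)) \<in> borel_measurable \<rho>"
  and borel_measurable_snd_proj_support [measurable]: "(\<lambda>a. snd (proj_support a)) \<in> borel_measurable \<rho>"
  by (rule measurable_compose[OF measurable_proj_support],
      intro borel_measurable_continuous_onI continuous_intros)+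

lemma borel_measurable_loss [measurable]: "loss w \<in> borel_measurable \<rho>"
proof -
  have "(\<lambda>a. pos_part (1 - snd a * (w \<bullet> fst a))) \<in> borel_measurable borel"
    unfolding pos_part_def by (intro borel_measurable_continuous_onI continuous_intros)
  from measurable_comp[OF measurable_proj_support this] show ?thesis
    unfolding loss_def comp_def .
qed

lemma integrable_loss: "w \<in> weights \<Longrightarrow> integrable \<rho> (loss w)"
  using loss_bounds by (intro \<rho>.integrable_const_bound[where B="1 + value_bound"] AE_I2) auto

definition good_sample :: "(nat \<Rightarrow> (real^'d) \<times> real) \<Rightarrow> bool" where
  "good_sample z \<longleftrightarrow> (\<forall>i<m. z i \<in> support)"

lemma good_sample_fst: "good_sample z \<Longrightarrow> j < m \<Longrightarrow> fst (z j) \<in> X"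
  and good_sample_snd: "good_sample z \<Longrightarrow> j < m \<Longrightarrow> \<bar>snd (z j)\<bar> = 1"
  unfolding good_sample_def support_def by force+

lemma emp_err_A_nonneg: "0 \<le> emp_err_A m r z A"
  unfolding emp_err_A_def by (intro mult_nonneg_nonneg sum_nonneg) (auto simp: pos_part_nonneg)

lemma emp_err_A_zero: "emp_err_A m r z 0 = 1"
  unfolding emp_err_A_def KA_def using m_pos by (simp add: pos_part_def)

text \<open>Comparing the minimiser with \<open>A = 0\<close>.\<close>
lemma matrix_norm_Az_le: "N (Az z) \<le> 1 / lam"
proof -
  have "emp_err_A m r z (Az z) + lam * N (Az z) \<le> emp_err_A m r z 0 + lam * N 0"
    using Az_min[of z] by (simp add: transpose_def vec_eq_iff)
  then have "lam * N (Az z) \<le> 1"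
    using emp_err_A_nonneg[of z "Az z"] by (simp add: emp_err_A_zero matrix_norm_0[OF N_norm])
  then show ?thesis using lam_pos by (simp add: field_simps)
qed

lemma abs_KA_Az_le: "\<bar>KA (Az z) u v\<bar> \<le> dual_norm N (outer u v) / lam"
proof -
  have "\<bar>KA (Az z) u v\<bar> \<le> N (Az z) * dual_norm N (outer u v)"
    using abs_inner_le_matrix_norm_mult_dual[OF N_norm, of "outer u v" "Az z"] by (simp add: inner_outer_eq_KA)
  also have "\<dots> \<le> (1 / lam) * dual_norm N (outer u v)"
    by (rule mult_right_mono[OF matrix_norm_Az_le dual_norm_nonneg[OF N_norm]])
  finally show ?thesis by simp
qed

lemma fz_eq_inner:
  assumes z: "good_sample z"
  obtains w where "w \<in> weights" "fz z = (\<lambda>x. w \<bullet> x)"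
proof -
  let ?A = "Az z"
  obtain \<alpha> where \<alpha>: "(\<Sum>j<m. \<bar>\<alpha> j\<bar>) \<le> 1 / r" and f: "fz z = (\<lambda>x. \<Sum>j<m. \<alpha> j * KA ?A (fst (z j)) x)"
    using fz_min[of z] unfolding hyp_space_def by blast
  define w where "w = (\<Sum>j<m. \<alpha> j *\<^sub>R (?A *v fst (z j)))"
  have w_inner: "w \<bullet> v = (\<Sum>j<m. \<alpha> j * KA ?A v (fst (z j)))" for v
    unfolding w_def KA_def by (simp add: inner_sum_left inner_sum_right inner_commute)
  have KA_le: "\<bar>KA ?A v (fst (z j))\<bar> \<le> dual_sup v / lam" if "j < m" for v j
    using abs_KA_Az_le[of z v "fst (z j)"] dual_sup_ge[OF good_sample_fst[OF z that], of v] lam_pos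
    by (meson divide_right_mono less_eq_real_def order.trans)
  have "w \<in> weights" unfolding weights_def
  proof (intro CollectI conjI ballI allI)
    fix x assume x: "x \<in> X"
    have "\<bar>w \<bullet> x\<bar> \<le> 1 / r * (dual_sup x / lam)"
      unfolding w_inner using KA_le dual_sup_nonneg lam_pos by (intro abs_sum_mult_le[OF \<alpha>]) auto
    also have "\<dots> = dual_sup x / (lam * r)" by simp
    also have "\<dots> \<le> value_bound"
      unfolding value_bound_def dual_sup_def using X_nonempty dual_norm_outer_le_Xstar[OF _ x] lam_pos r_pos
      by (intro divide_right_mono cSup_least) auto
    finally show "\<bar>w \<bullet> x\<bar> \<le> value_bound" .
  next
    fix v
    have "\<bar>w \<bullet> v\<bar> \<le> 1 / r * (dual_sup v / lam)"
      unfolding w_inner using KA_le dual_sup_nonneg lam_pos by (intro abs_sum_mult_le[OF \<alpha>]) auto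
    then show "w \<bullet> v \<le> dual_sup v / (lam * r)" by (simp add: field_simps)
  qed
  moreover have "fz z = (\<lambda>x. w \<bullet> x)"
    unfolding f w_inner using KA_sym[OF conjunct1[OF Az_min]] by presburger
  ultimately show ?thesis by (rule that)
qed

lemma emp_hinge_fz_le: "good_sample z \<Longrightarrow> emp_hinge m z (fz z) \<le> emp_err_A m r z (Az z)"
proof -
  assume z: "good_sample z"
  let ?A = "Az z"
  define f0 where "f0 = (\<lambda>x. \<Sum>j<m. (snd (z j) / (real m * r)) * KA ?A (fst (z j)) x)"
  have "(\<Sum>j<m. \<bar>snd (z j) / (real m * r)\<bar>) = (\<Sum>j<m. 1 / (real m * r))"
    using good_sample_snd[OF z] r_pos by (intro sum.cong) (auto simp: abs_divide)
  also have "\<dots> = 1 / r" using m_pos r_pos by simp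
  finally have "f0 \<in> hyp_space m r z ?A"
    unfolding hyp_space_def f0_def by (intro CollectI exI[of _ "\<lambda>j. snd (z j) / (real m * r)"]) simp
  then have "emp_hinge m z (fz z) \<le> emp_hinge m z f0" using fz_min[of z] by blast
  also have "emp_hinge m z f0 = emp_err_A m r z ?A"
  proof -
    have "snd (z i) * f0 (fst (z i))
        = 1 / (real m * r) * (\<Sum>j<m. snd (z i) * snd (z j) * KA ?A (fst (z i)) (fst (z j)))" for i
      unfolding f0_def sum_distrib_left
      by (rule sum.cong) (use KA_sym[OF conjunct1[OF Az_min]] in \<open>auto simp: field_simps\<close>)
    then show ?thesis unfolding emp_hinge_def emp_err_A_def by simp
  qed
  finally show ?thesis .
qed

definition risk :: "real^'d \<Rightarrow> real" where
  "risk w = (\<integral>a. loss w a \<partial>\<rho>)"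

definition emp_risk :: "real^'d \<Rightarrow> (nat \<Rightarrow> (real^'d) \<times> real) \<Rightarrow> real" where
  "emp_risk w z = (1 / real m) * (\<Sum>i<m. loss w (z i))"

lemma emp_hinge_eq_emp_risk: "good_sample z \<Longrightarrow> emp_hinge m z (\<lambda>x. w \<bullet> x) = emp_risk w z"
  unfolding emp_hinge_def emp_risk_def loss_def good_sample_def proj_support_def support_def
  by (auto intro!: sum.cong)

lemma gen_err_eq_risk: "gen_err \<rho> (\<lambda>x. w \<bullet> x) = risk w"
  unfolding gen_err_def risk_def
proof (rule integral_cong_AE)
  show "(\<lambda>a. pos_part (1 - snd a * (w \<bullet> fst a))) \<in> borel_measurable \<rho>"
    unfolding pos_part_def measurable_cong_sets[OF rho_sets refl]
    by (intro borel_measurable_continuous_onI continuous_intros)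
  show "AE a in \<rho>. pos_part (1 - snd a * (w \<bullet> fst a)) = loss w a"
    using rho_supp by (rule AE_mp) (auto simp: loss_def proj_support_def support_def)
qed simp

lemma risk_bounds: "w \<in> weights \<Longrightarrow> 0 \<le> risk w \<and> risk w \<le> 1 + value_bound"
proof -
  assume w: "w \<in> weights"
  have "0 \<le> risk w" unfolding risk_def by (rule Bochner_Integration.integral_nonneg) (use loss_bounds[OF w] in auto)
  moreover have "risk w \<le> (\<integral>a. 1 + value_bound \<partial>\<rho>)"
    unfolding risk_def by (rule integral_mono[OF integrable_loss[OF w]]) (use loss_bounds[OF w] in auto)
  ultimately show ?thesis by (simp add: \<rho>.prob_space)
qed

lemma emp_risk_bounds: "w \<in> weights \<Longrightarrow> 0 \<le> emp_risk w z \<and> emp_risk w z \<le> 1 + value_bound"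
proof -
  assume w: "w \<in> weights"
  have "(\<Sum>i<m. loss w (z i)) \<le> (\<Sum>i<m. 1 + value_bound)" by (rule sum_mono) (use loss_bounds[OF w] in auto)
  moreover have "0 \<le> (\<Sum>i<m. loss w (z i))" by (rule sum_nonneg) (use loss_bounds[OF w] in auto)
  ultimately show ?thesis unfolding emp_risk_def using m_pos by (auto simp: field_simps)
qed

lemma risk_lipschitz: "w \<in> weights \<Longrightarrow> d \<in> weights \<Longrightarrow> \<bar>risk w - risk d\<bar> \<le> radius * norm (w - d)"
proof -
  assume w: "w \<in> weights" and d: "d \<in> weights"
  have "\<bar>risk w - risk d\<bar> = \<bar>\<integral>a. loss w a - loss d a \<partial>\<rho>\<bar>"
    unfolding risk_def using integrable_loss[OF w] integrable_loss[OF d] by simp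
  also have "\<dots> \<le> (\<integral>a. radius * norm (w - d) \<partial>\<rho>)"
    using integrable_loss[OF w] integrable_loss[OF d] loss_lipschitz
    by (intro order.trans[OF integral_abs_bound] integral_mono) auto
  finally show ?thesis by (simp add: \<rho>.prob_space)
qed

lemma emp_risk_lipschitz: "\<bar>emp_risk w z - emp_risk d z\<bar> \<le> radius * norm (w - d)"
proof -
  have "\<bar>\<Sum>i<m. loss w (z i) - loss d (z i)\<bar> \<le> real m * (radius * norm (w - d))"
    using abs_sum_mult_le[where J="{..<m}" and \<alpha>="\<lambda>_. 1" and a="real m"
        and c="\<lambda>i. loss w (z i) - loss d (z i)"] loss_lipschitz radius_pos
    by simp
  then show ?thesis unfolding emp_risk_def using m_pos by (simp add: sum_subtractf field_simps)
qed

lemma emp_risk_update: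
  "i < m \<Longrightarrow> emp_risk w (z(i:=a)) - emp_risk w (z(i:=b)) = (loss w a - loss w b) / real m"
proof -
  assume i: "i < m"
  have "(\<Sum>j<m. loss w ((z(i:=c)) j)) = loss w c + (\<Sum>j\<in>{..<m} - {i}. loss w (z j))" for c
    using i by (simp add: sum.remove[of "{..<m}" i])
  then show ?thesis unfolding emp_risk_def using m_pos by (simp add: field_simps)
qed

abbreviation sample :: "(nat \<Rightarrow> (real^'d) \<times> real) measure" where
  "sample \<equiv> sample_measure m \<rho>"

abbreviation signs :: "(nat \<Rightarrow> real) measure" where
  "signs \<equiv> PiM {..<m} (\<lambda>_. rademacher)"

lemma prob_space_sample: "prob_space sample"
  unfolding sample_measure_def by (rule prob_space_PiM) (simp add: rho_prob)

lemma prob_space_signs: "prob_space signs"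
  by (rule prob_space_PiM) (simp add: prob_space_rademacher)

lemma AE_good_sample: "AE z in sample. good_sample z"
proof -
  have "AE z in PiM {..<m} (\<lambda>_. \<rho>). \<forall>i\<in>{..<m}. z i \<in> support"
    using rho_supp rho_prob unfolding support_def[symmetric] by (intro AE_finite_allI AE_PiM_component) auto
  then show ?thesis unfolding good_sample_def sample_measure_def by (elim AE_mp) (auto intro!: AE_I2)
qed

lemma good_sample_iff: "good_sample z \<longleftrightarrow> (\<forall>i\<in>{..<m}. z i \<in> support)"
  unfolding good_sample_def by auto

lemma pred_good_sample_fst: "Measurable.pred (sample \<Otimes>\<^sub>M M) (\<lambda>p. good_sample (fst p))"
  unfolding good_sample_iff sample_measure_def
  by (intro pred_intros_finite(3) finite_lessThan pred_sets2[OF support_sets]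
      measurable_PiM_fst_component measurable_ident_sets) auto

lemma good_sample_sets: "{z \<in> space sample. good_sample z} \<in> sets sample"
proof -
  have "Measurable.pred sample good_sample"
    unfolding good_sample_iff sample_measure_def
    by (intro pred_intros_finite(3) finite_lessThan)
       (rule pred_sets2[OF support_sets], rule measurable_component_singleton, simp)
  then show ?thesis unfolding pred_def .
qed

definition signed_point :: "(real^'d) \<times> real \<Rightarrow> real^'d" where
  "signed_point a = snd (proj_support a) *\<^sub>R fst (proj_support a)"

definition rad_vector :: "(nat \<Rightarrow> (real^'d) \<times> real) \<Rightarrow> (nat \<Rightarrow> real) \<Rightarrow> real^'d" where
  "rad_vector z \<sigma> = (1 / real m) *\<^sub>R (\<Sum>i<m. \<sigma> i *\<^sub>R signed_point (z i))"

text \<open>Rademacher variables are \<open>\<plusminus>1\<close> only almost surely; clipping makes the integrand bounded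
  everywhere.\<close>
definition sign_clip :: "real \<Rightarrow> real" where
  "sign_clip s = (if s = -1 then -1 else 1)"

lemma norm_signed_point_le: "norm (signed_point a) \<le> radius"
  unfolding signed_point_def using abs_proj_support_snd[of a] norm_le_radius[OF proj_support_fst[of a]] by simp

lemma norm_rad_vector_le:
  assumes "\<And>i. \<bar>\<sigma> i\<bar> \<le> 1"
  shows "norm (rad_vector z \<sigma>) \<le> radius"
proof -
  have "norm (\<sigma> i *\<^sub>R signed_point (z i)) \<le> 1 * radius" for i
    using assms[of i] norm_signed_point_le[of "z i"] by (simp only: norm_scaleR) (rule mult_mono, auto)
  then have "norm (\<Sum>i<m. \<sigma> i *\<^sub>R signed_point (z i)) \<le> (\<Sum>i<m. radius)"
    by (intro order.trans[OF norm_sum sum_mono]) simp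
  then show ?thesis unfolding rad_vector_def using m_pos by (simp add: field_simps)
qed

lemma dual_sup_rad_vector_le:
  assumes "\<And>i. \<bar>\<sigma> i\<bar> \<le> 1"
  shows "dual_sup (rad_vector z \<sigma>) \<le> dual_const * radius * radius"
proof -
  have "dual_const * radius * norm (rad_vector z \<sigma>) \<le> dual_const * radius * radius"
    using norm_rad_vector_le[OF assms] dual_const_pos radius_pos by (intro mult_left_mono) auto
  then show ?thesis using dual_sup_le[of "rad_vector z \<sigma>"] by linarith
qed

lemma rad_complexity_integrand:
  "Sup ((\<lambda>x. dual_norm N ((1 / real m) *\<^sub>R (\<Sum>i<m. (s i * snd (z i)) *\<^sub>R outer (fst (z i)) x))) ` X)
   = dual_sup ((1 / real m) *\<^sub>R (\<Sum>i<m. (s i * snd (z i)) *\<^sub>R fst (z i)))"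
proof -
  have eq: "(1 / real m) *\<^sub>R (\<Sum>i<m. c i *\<^sub>R outer (u i) x) = outer ((1 / real m) *\<^sub>R (\<Sum>i<m. c i *\<^sub>R u i)) x"
    for c u x by (subst outer_sum_left) (rule scaleR_outer_left)
  show ?thesis unfolding dual_sup_def by (simp only: eq)
qed

lemma rad_vector_sign_clip:
  "good_sample z \<Longrightarrow> (\<forall>i<m. s i \<in> {-1, 1}) \<Longrightarrow>
    (1 / real m) *\<^sub>R (\<Sum>i<m. (s i * snd (z i)) *\<^sub>R fst (z i)) = rad_vector z (\<lambda>i. sign_clip (s i))"
  unfolding rad_vector_def good_sample_def signed_point_def proj_support_def sign_clip_def support_def
  by (intro arg_cong[where f="\<lambda>v. (1 / real m) *\<^sub>R v"] sum.cong) auto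

lemma borel_measurable_signed_point [measurable]: "signed_point \<in> borel_measurable \<rho>"
  unfolding signed_point_def by measurable

lemma borel_measurable_dual_sup [measurable]: "dual_sup \<in> borel_measurable borel"
  by (rule borel_measurable_continuous_onI[OF continuous_dual_sup])

lemma integral_signs_eq_sign_avg:
  "(\<integral>s. dual_sup (rad_vector z (\<lambda>i. sign_clip (s i))) \<partial>signs) = sign_avg {..<m} (\<lambda>\<sigma>. dual_sup (rad_vector z \<sigma>))"
proof -
  have "(\<integral>s. dual_sup (rad_vector z (\<lambda>i. sign_clip (s i))) \<partial>signs)
      = sign_avg {..<m} (\<lambda>s. dual_sup (rad_vector z (\<lambda>i. sign_clip (s i))))"
    using dual_sup_rad_vector_le dual_sup_nonneg
    by (intro integral_PiM_rademacher[where C="dual_const * radius * radius"])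
       (auto simp: rad_vector_def sign_clip_def rademacher_def)
  also have "\<dots> = sign_avg {..<m} (\<lambda>\<sigma>. dual_sup (rad_vector z \<sigma>))"
    unfolding sign_avg_def sign_vectors_def rad_vector_def sign_clip_def
    by (intro arg_cong[where f="\<lambda>x. x / _"] sum.cong refl arg_cong[where f=dual_sup]
        arg_cong[where f="\<lambda>v. (1 / real m) *\<^sub>R v"]) auto
  finally show ?thesis .
qed

lemma borel_measurable_sign_clip [measurable]: "sign_clip \<in> borel_measurable rademacher"
  and borel_measurable_rademacher_id: "(\<lambda>s. s) \<in> borel_measurable rademacher"
  unfolding rademacher_def by simp_all

lemma borel_measurable_fst_rho [measurable]: "fst \<in> borel_measurable \<rho>"
  and borel_measurable_snd_rho [measurable]: "snd \<in> borel_measurable \<rho>"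
  unfolding measurable_cong_sets[OF rho_sets refl]
  by (intro borel_measurable_continuous_onI continuous_intros)+

lemma AE_signs: "AE s in signs. \<forall>i<m. s i \<in> {-1, 1}"
proof -
  have "AE s in rademacher. s \<in> {-1, 1}"
    unfolding rademacher_def by (simp add: AE_measure_pmf_iff)
  then have "AE s in signs. \<forall>i\<in>{..<m}. s i \<in> {-1, 1}"
    using prob_space_rademacher by (intro AE_finite_allI AE_PiM_component) auto
  then show ?thesis by (elim AE_mp) (auto intro!: AE_I2)
qed

lemma rad_complexity_eq_clipped:
  "rad_complexity m \<rho> N X = (\<integral>p. dual_sup (rad_vector (fst p) (\<lambda>i. sign_clip (snd p i))) \<partial>(sample \<Otimes>\<^sub>M signs))"
proof -
  interpret S: pair_prob_space sample signs
    using prob_space_sample prob_space_signs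
    by (intro pair_prob_space.intro pair_sigma_finite.intro) (auto intro: prob_space_imp_sigma_finite)
  have "Measurable.pred (sample \<Otimes>\<^sub>M signs) (\<lambda>p. snd p i \<in> {-1, 1})" if "i \<in> {..<m}" for i
    by (rule pred_sets2[OF _ measurable_PiM_snd_component[OF that borel_measurable_rademacher_id]])
       (intro borel_closed finite_imp_closed, simp)
  then have "Measurable.pred (sample \<Otimes>\<^sub>M signs) (\<lambda>p. \<forall>i\<in>{..<m}. snd p i \<in> {-1, 1})"
    by (intro pred_intros_finite(3) finite_lessThan)
  then have "Measurable.pred (sample \<Otimes>\<^sub>M signs) (\<lambda>p. good_sample (fst p) \<and> (\<forall>i<m. snd p i \<in> {-1, 1}))"
    unfolding Ball_def lessThan_iff by (rule pred_intros_logic(3)[OF pred_good_sample_fst])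
  then have sets: "{p \<in> space (sample \<Otimes>\<^sub>M signs). good_sample (fst p) \<and> (\<forall>i<m. snd p i \<in> {-1, 1})}
      \<in> sets (sample \<Otimes>\<^sub>M signs)"
    unfolding pred_def .
  have "(\<lambda>p. (snd p i * snd (fst p i)) *\<^sub>R fst (fst p i)) \<in> borel_measurable (sample \<Otimes>\<^sub>M signs)"
    if "i \<in> {..<m}" for i
    unfolding sample_measure_def
    using measurable_PiM_snd_component[OF that borel_measurable_rademacher_id]
      measurable_PiM_fst_component[OF that borel_measurable_snd_rho]
      measurable_PiM_fst_component[OF that borel_measurable_fst_rho]
    by (intro borel_measurable_scaleR borel_measurable_times) auto
  then have "(\<lambda>p. (1 / real m) *\<^sub>R (\<Sum>i<m. (snd p i * snd (fst p i)) *\<^sub>R fst (fst p i)))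
      \<in> borel_measurable (sample \<Otimes>\<^sub>M signs)"
    by (rule borel_measurable_scaleR[OF borel_measurable_const borel_measurable_sum])
  note raw_measurable = measurable_compose[OF this borel_measurable_dual_sup]
  have "AE p in sample \<Otimes>\<^sub>M signs. good_sample (fst p) \<and> (\<forall>i<m. snd p i \<in> {-1, 1})"
    by (rule S.AE_pair_measure[OF sets]) (use AE_good_sample AE_signs in \<open>auto elim!: AE_mp intro!: AE_I2\<close>)
  then show ?thesis
    unfolding rad_complexity_def rad_complexity_integrand
    by (intro integral_cong_AE raw_measurable) (auto simp: rad_vector_def sample_measure_def rad_vector_sign_clip elim!: AE_mp)
qed

lemma rad_complexity_eq:
  "rad_complexity m \<rho> N X = (\<integral>z. sign_avg {..<m} (\<lambda>\<sigma>. dual_sup (rad_vector z \<sigma>)) \<partial>sample)"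
proof -
  interpret S: pair_prob_space sample signs
    using prob_space_sample prob_space_signs
    by (intro pair_prob_space.intro pair_sigma_finite.intro) (auto intro: prob_space_imp_sigma_finite)
  have abs_sign_clip: "\<bar>sign_clip s\<bar> \<le> 1" for s unfolding sign_clip_def by simp
  have "integrable (sample \<Otimes>\<^sub>M signs) (\<lambda>p. dual_sup (rad_vector (fst p) (\<lambda>i. sign_clip (snd p i))))"
    using dual_sup_rad_vector_le[OF abs_sign_clip] dual_sup_nonneg
    by (intro S.P.integrable_const_bound[where B="dual_const * radius * radius"])
       (auto simp: rad_vector_def sample_measure_def)
  from S.integral_fst'[OF this] show ?thesis
    by (simp add: rad_complexity_eq_clipped integral_signs_eq_sign_avg)
qed

definition sup_dev :: "(real^'d) set \<Rightarrow> (nat \<Rightarrow> (real^'d) \<times> real) \<Rightarrow> real" where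
  "sup_dev D z = max_over D (\<lambda>w. risk w - emp_risk w z)"

lemma integrable_dual_sup_rad_vector: "integrable sample (\<lambda>z. dual_sup (rad_vector z \<sigma>))"
proof -
  interpret S: prob_space sample by (rule prob_space_sample)
  define C where "C = dual_const * radius * (\<Sum>i<m. \<bar>\<sigma> i\<bar> * radius)"
  have "norm (rad_vector z \<sigma>) \<le> (\<Sum>i<m. \<bar>\<sigma> i\<bar> * radius)" for z
  proof -
    have "norm (\<Sum>i<m. \<sigma> i *\<^sub>R signed_point (z i)) \<le> (\<Sum>i<m. \<bar>\<sigma> i\<bar> * radius)"
      by (rule order.trans[OF norm_sum sum_mono]) (simp add: norm_signed_point_le mult_left_mono)
    moreover have "norm (rad_vector z \<sigma>) \<le> norm (\<Sum>i<m. \<sigma> i *\<^sub>R signed_point (z i))"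
      unfolding rad_vector_def using m_pos by (simp add: field_simps mult_le_cancel_right1)
    ultimately show ?thesis by linarith
  qed
  then have "dual_sup (rad_vector z \<sigma>) \<le> C" for z
    unfolding C_def using dual_sup_le[of "rad_vector z \<sigma>"] dual_const_pos radius_pos
    by (meson mult_left_mono order.trans less_imp_le mult_nonneg_nonneg)
  moreover have "(\<lambda>z. rad_vector z \<sigma>) \<in> borel_measurable sample"
    unfolding rad_vector_def sample_measure_def
    by (intro borel_measurable_scaleR borel_measurable_const borel_measurable_sum)
       (rule measurable_compose[OF measurable_component_singleton[where M="\<lambda>_. \<rho>"] borel_measurable_signed_point],
        simp)
  ultimately show ?thesis
    using dual_sup_nonneg
    by (intro S.integrable_const_bound[where B=C] AE_I2 measurable_compose[OF _ borel_measurable_dual_sup]) auto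
qed

text \<open>With \<open>t = 2 y (w \<bullet> x)\<close>, twice the hinge loss is \<open>\<phi>(t)\<close> for the 1-Lipschitz
  \<open>\<phi>(u) = 2 (1 - u/2)\<^sub>+\<close>, and \<open>t\<close> is linear in \<open>w\<close>.\<close>
lemma sign_avg_max_loss_le:
  assumes D: "finite D" "D \<subseteq> weights" "D \<noteq> {}"
  shows "sign_avg {..<m} (\<lambda>\<sigma>. max_over D (\<lambda>w. (\<Sum>j\<in>{..<m}. 2 * \<sigma> j * loss w (z j)) + 0))
      \<le> (2 * real m / (lam * r)) * sign_avg {..<m} (\<lambda>\<sigma>. dual_sup (rad_vector z \<sigma>))"
proof -
  define t where "t j w = 2 * snd (proj_support (z j)) * (w \<bullet> fst (proj_support (z j)))" for j w
  have "(\<Sum>j\<in>{..<m}. 2 * \<sigma> j * loss w (z j)) = (\<Sum>j\<in>{..<m}. \<sigma> j * (2 * pos_part (1 - t j w / 2)))" for \<sigma> w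
    by (rule sum.cong) (auto simp: t_def loss_def)
  then have "sign_avg {..<m} (\<lambda>\<sigma>. max_over D (\<lambda>w. (\<Sum>j\<in>{..<m}. 2 * \<sigma> j * loss w (z j)) + 0))
      \<le> sign_avg {..<m} (\<lambda>\<sigma>. max_over D (\<lambda>w. (\<Sum>j\<in>{..<m}. \<sigma> j * t j w) + 0))"
    using contraction[OF D(1,3) hinge_contraction_lipschitz, of "{..<m}" t "\<lambda>_. 0"] by simp
  also have "\<dots> \<le> sign_avg {..<m} (\<lambda>\<sigma>. (2 * real m / (lam * r)) * dual_sup (rad_vector z \<sigma>))"
  proof (rule sign_avg_mono, simp)
    fix \<sigma> :: "nat \<Rightarrow> real"
    have "(\<Sum>j\<in>{..<m}. \<sigma> j * t j w) = 2 * real m * (w \<bullet> rad_vector z \<sigma>)" for w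
      unfolding t_def rad_vector_def signed_point_def using m_pos
      by (simp add: inner_sum_right sum_distrib_left mult_ac)
    moreover have "2 * real m * (w \<bullet> rad_vector z \<sigma>) \<le> 2 * real m * (dual_sup (rad_vector z \<sigma>) / (lam * r))"
      if "w \<in> D" for w
      using weights_dual_sup[of w "rad_vector z \<sigma>"] that D(2) by (intro mult_left_mono) auto
    ultimately show "max_over D (\<lambda>w. (\<Sum>j\<in>{..<m}. \<sigma> j * t j w) + 0)
        \<le> (2 * real m / (lam * r)) * dual_sup (rad_vector z \<sigma>)"
      unfolding max_over_le_iff[OF D(1,3)] by simp
  qed
  also have "\<dots> = (2 * real m / (lam * r)) * sign_avg {..<m} (\<lambda>\<sigma>. dual_sup (rad_vector z \<sigma>))"
    by (rule sign_avg_mult_left)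
  finally show ?thesis .
qed

lemma expected_sup_dev_le:
  assumes D: "finite D" "D \<subseteq> weights" "D \<noteq> {}"
  shows "(\<integral>z. sup_dev D z \<partial>sample) \<le> 2 * rad_complexity m \<rho> N X / (lam * r)"
proof -
  interpret S: symmetrization \<rho> D loss "1 + value_bound"
    using rho_prob D loss_bounds by unfold_locales auto
  interpret P: prob_space "PiM {..<m} (\<lambda>_. \<rho>)" by (rule prob_space_PiM) (simp add: rho_prob)
  have m: "real m > 0" using m_pos by simp
  have scaled: "sup_dev D z = (1 / real m) * max_over D (\<lambda>w. (\<Sum>j\<in>{..<m}. S.mean w - loss w (z j)) + 0)" for z
  proof -
    have "risk w - emp_risk w z = (1 / real m) * ((\<Sum>j\<in>{..<m}. S.mean w - loss w (z j)) + 0)" for w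
      unfolding emp_risk_def S.mean_def risk_def using m by (simp add: sum_subtractf field_simps)
    then have "sup_dev D z = max_over D (\<lambda>w. (1 / real m) * ((\<Sum>j\<in>{..<m}. S.mean w - loss w (z j)) + 0))"
      unfolding sup_dev_def by presburger
    also have "\<dots> = (1 / real m) * max_over D (\<lambda>w. (\<Sum>j\<in>{..<m}. S.mean w - loss w (z j)) + 0)"
      by (rule max_over_mult_left[OF D(1,3)]) simp
    finally show ?thesis .
  qed
  have int_sym: "integrable (PiM {..<m} (\<lambda>_. \<rho>))
      (\<lambda>z. sign_avg {..<m} (\<lambda>\<sigma>. max_over D (\<lambda>w. (\<Sum>j\<in>{..<m}. 2 * \<sigma> j * loss w (z j)) + 0)))"
    by (intro S.integrable_linear_intros P.integrable_const; assumption)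
  have "(\<integral>z. sup_dev D z \<partial>sample)
      = (1 / real m) * (\<integral>z. max_over D (\<lambda>w. (\<Sum>j\<in>{..<m}. S.mean w - loss w (z j)) + 0) \<partial>PiM {..<m} (\<lambda>_. \<rho>))"
    unfolding scaled sample_measure_def by simp
  also have "\<dots> \<le> (1 / real m) * (\<integral>z. sign_avg {..<m}
      (\<lambda>\<sigma>. max_over D (\<lambda>w. (\<Sum>j\<in>{..<m}. 2 * \<sigma> j * loss w (z j)) + 0)) \<partial>PiM {..<m} (\<lambda>_. \<rho>))"
    using S.symmetrization[of "{..<m}" "\<lambda>_. 0"] m by (intro mult_left_mono) auto
  also have "\<dots> \<le> (1 / real m) * (\<integral>z. (2 * real m / (lam * r))
      * sign_avg {..<m} (\<lambda>\<sigma>. dual_sup (rad_vector z \<sigma>)) \<partial>PiM {..<m} (\<lambda>_. \<rho>))"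
    using m integrable_dual_sup_rad_vector unfolding sample_measure_def
    by (intro mult_left_mono integral_mono sign_avg_max_loss_le[OF D] integrable_mult_right
        integrable_sign_avg int_sym) auto
  also have "\<dots> = 2 * rad_complexity m \<rho> N X / (lam * r)"
    using m unfolding rad_complexity_eq sample_measure_def by simp
  finally show ?thesis .
qed

context
  fixes D :: "(real^'d) set"
  assumes D: "finite D" "D \<subseteq> weights" "D \<noteq> {}"
begin

lemma abs_sup_dev_le: "\<bar>sup_dev D z\<bar> \<le> 1 + value_bound"
  unfolding sup_dev_def
proof (rule abs_max_over_le[OF D(1,3)])
  fix w assume "w \<in> D"
  then have "w \<in> weights" using D(2) by auto
  then show "\<bar>risk w - emp_risk w z\<bar> \<le> 1 + value_bound"
    using risk_bounds[of w] emp_risk_bounds[of w z] by linarith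
qed

lemma borel_measurable_sup_dev: "sup_dev D \<in> borel_measurable sample"
  unfolding sup_dev_def emp_risk_def sample_measure_def
  by (intro borel_measurable_max_over[OF D(1,3)] borel_measurable_diff borel_measurable_const
      borel_measurable_times borel_measurable_sum)
     (rule measurable_compose[OF measurable_component_singleton[where M="\<lambda>_. \<rho>"] borel_measurable_loss], simp)

lemma sup_dev_bounded_differences:
  assumes "i < m"
  shows "sup_dev D (z(i:=a)) - sup_dev D (z(i:=b)) \<le> 2 * value_bound / real m"
proof -
  have "sup_dev D (z(i:=a)) \<le> max_over D (\<lambda>w. (risk w - emp_risk w (z(i:=b))) + 2 * value_bound / real m)"
    unfolding sup_dev_def
  proof (rule max_over_mono[OF D(1,3)])
    fix w assume "w \<in> D"
    then have "loss w b - loss w a \<le> 2 * value_bound" using D(2) loss_diff_le by blast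
    then have "(loss w b - loss w a) / real m \<le> 2 * value_bound / real m" using m_pos by (simp add: divide_right_mono)
    then show "risk w - emp_risk w (z(i:=a)) \<le> risk w - emp_risk w (z(i:=b)) + 2 * value_bound / real m"
      using emp_risk_update[OF assms, of w z b a] by simp
  qed
  also have "\<dots> \<le> sup_dev D (z(i:=b)) + 2 * value_bound / real m"
    unfolding sup_dev_def
    using max_over_add_le[OF D(1,3), of "\<lambda>w. risk w - emp_risk w (z(i:=b))" "\<lambda>_. 2 * value_bound / real m"]
    by (simp add: max_over_const[OF D(1,3)])
  finally show ?thesis by simp
qed

lemma sup_dev_tail:
  assumes "value_bound > 0" "a > 0"
  shows "measure sample {z \<in> space sample. sup_dev D z - (\<integral>z. sup_dev D z \<partial>sample) \<ge> a}
           \<le> exp (- a\<^sup>2 * real m / (2 * value_bound\<^sup>2))"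
proof -
  have "measure sample {z \<in> space sample. sup_dev D z - (\<integral>z. sup_dev D z \<partial>sample) \<ge> a}
      \<le> exp (- 2 * a\<^sup>2 / (real (card {..<m}) * (2 * value_bound / real m)\<^sup>2))"
    unfolding sample_measure_def
    using assms m_pos abs_sup_dev_le sup_dev_bounded_differences borel_measurable_sup_dev
    by (intro McDiarmid_inequality[OF rho_prob, where K="1 + value_bound"])
       (auto simp: sample_measure_def lessThan_empty_iff)
  also have "- 2 * a\<^sup>2 / (real (card {..<m}) * (2 * value_bound / real m)\<^sup>2) = - a\<^sup>2 * real m / (2 * value_bound\<^sup>2)"
    using assms m_pos by (simp add: field_simps power2_eq_square)
  finally show ?thesis .
qed

lemma risk_le_via_net:
  assumes w: "w \<in> weights" and d: "d \<in> D" "norm (w - d) < \<eta>"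
  shows "risk w - emp_risk w z \<le> sup_dev D z + 2 * radius * \<eta>"
proof -
  have "risk d - emp_risk d z \<le> sup_dev D z" unfolding sup_dev_def by (rule max_over_ge[OF D(1,3) d(1)])
  moreover have "radius * norm (w - d) \<le> radius * \<eta>" using radius_pos d(2) by simp
  moreover have "d \<in> weights" using d(1) D(2) by auto
  ultimately show ?thesis
    using risk_lipschitz[OF w, of d] emp_risk_lipschitz[of w z d] by (simp add: abs_le_iff)
qed

end

lemma learned_hypothesis_risk:
  assumes "good_sample z"
  obtains w where "w \<in> weights" "gen_err \<rho> (fz z) = risk w" "emp_risk w z \<le> emp_err_A m r z (Az z)"
proof -
  obtain w where w: "w \<in> weights" "fz z = (\<lambda>x. w \<bullet> x)" using fz_eq_inner[OF assms] by blast
  have "emp_risk w z \<le> emp_err_A m r z (Az z)"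
    using emp_hinge_fz_le[OF assms] emp_hinge_eq_emp_risk[OF assms, of w] by (simp add: w(2))
  with w that show ?thesis by (simp add: gen_err_eq_risk)
qed

lemma risk_eq_emp_risk_of_value_bound_0:
  assumes "value_bound = 0" "w \<in> weights"
  shows "risk w = emp_risk w z"
proof -
  have "snd (proj_support a) * (w \<bullet> fst (proj_support a)) = 0" for a
    using abs_margin_le_value_bound[OF assms(2), of a] assms(1) by linarith
  then have "loss w = (\<lambda>_. 1)" unfolding loss_def pos_part_def by (simp only: diff_zero max_absorb1 zero_le_one)
  then show ?thesis unfolding risk_def emp_risk_def using m_pos by (simp add: \<rho>.prob_space)
qed

lemma rad_complexity_nonneg: "0 \<le> rad_complexity m \<rho> N X"
  unfolding rad_complexity_eq
  by (intro Bochner_Integration.integral_nonneg sign_avg_nonneg dual_sup_nonneg)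

context
  fixes D :: "(real^'d) set"
  assumes D: "finite D" "D \<subseteq> weights" "D \<noteq> {}"
begin

lemma small_sup_dev_sets: "{z \<in> space sample. good_sample z \<and> sup_dev D z - c < a} \<in> sets sample"
proof -
  have "{z \<in> space sample. sup_dev D z - c < a} \<in> sets sample"
    using borel_measurable_sup_dev[OF D] by (intro borel_measurable_less) auto
  then show ?thesis using good_sample_sets by (simp add: Collect_conj_eq[symmetric] sets.Int)
qed

lemma measure_small_sup_dev:
  assumes B: "value_bound > 0" and \<delta>: "0 < \<delta>" "\<delta> < 1"
    and a: "a = value_bound * sqrt (2 * ln (1 / \<delta>) / real m)"
  shows "1 - \<delta> \<le> measure sample {z \<in> space sample. good_sample z \<and> sup_dev D z - (\<integral>z. sup_dev D z \<partial>sample) < a}"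
proof -
  interpret S: prob_space sample by (rule prob_space_sample)
  let ?E = "\<integral>z. sup_dev D z \<partial>sample"
  note [measurable] = borel_measurable_sup_dev[OF D] good_sample_sets
  have "a\<^sup>2 = value_bound\<^sup>2 * (2 * ln (1 / \<delta>) / real m)"
    unfolding a using \<delta> by (simp add: power_mult_distrib)
  then have "- a\<^sup>2 * real m / (2 * value_bound\<^sup>2) = ln \<delta>"
    using B m_pos \<delta> by (simp add: field_simps ln_div)
  moreover have "a > 0" unfolding a using B \<delta> m_pos by simp
  then have "measure sample {z \<in> space sample. sup_dev D z - ?E \<ge> a} \<le> exp (- a\<^sup>2 * real m / (2 * value_bound\<^sup>2))"
    by (rule sup_dev_tail[OF D B])
  ultimately have tail: "measure sample {z \<in> space sample. sup_dev D z - ?E \<ge> a} \<le> \<delta>"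
    using \<delta> by simp
  have "measure sample {z \<in> space sample. good_sample z \<and> sup_dev D z - ?E < a}
      = measure sample (space sample - {z \<in> space sample. sup_dev D z - ?E \<ge> a})"
    using AE_good_sample by (intro measure_eq_AE) (auto elim!: AE_mp)
  also have "\<dots> = 1 - measure sample {z \<in> space sample. sup_dev D z - ?E \<ge> a}"
    by (rule S.prob_compl) measurable
  finally show ?thesis using tail by simp
qed

lemma gen_err_le_of_small_sup_dev:
  assumes net: "\<And>w. w \<in> weights \<Longrightarrow> \<exists>d\<in>D. norm (w - d) < \<eta>"
    and z: "good_sample z" "sup_dev D z - (\<integral>z. sup_dev D z \<partial>sample) < a"
  shows "gen_err \<rho> (fz z) \<le> emp_err_A m r z (Az z) + 4 * rad_complexity m \<rho> N X / (lam * r) + a + 2 * radius * \<eta>"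
proof -
  obtain w where w: "w \<in> weights" "gen_err \<rho> (fz z) = risk w" "emp_risk w z \<le> emp_err_A m r z (Az z)"
    using learned_hypothesis_risk[OF z(1)] by blast
  obtain d where "d \<in> D" "norm (w - d) < \<eta>" using net[OF w(1)] by blast
  from risk_le_via_net[OF D w(1) this] have "risk w - emp_risk w z \<le> sup_dev D z + 2 * radius * \<eta>" .
  moreover have "0 \<le> rad_complexity m \<rho> N X / (lam * r)"
    using rad_complexity_nonneg lam_pos r_pos by simp
  ultimately show ?thesis using w z(2) expected_sup_dev_le[OF D] by linarith
qed

end

theorem generalization_bound:
  assumes \<delta>: "0 < \<delta>" "\<delta> < 1"
  shows "\<exists>S \<in> sets sample. measure sample S \<ge> 1 - \<delta> \<and>
           (\<forall>z \<in> S. gen_err \<rho> (fz z) \<le> emp_err_A m r z (Az z)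
                + 4 * rad_complexity m \<rho> N X / (lam * r)
                + 2 * Xstar N X / (lam * r) * sqrt (2 * ln (1 / \<delta>) / real m))"
proof -
  define a where "a = value_bound * sqrt (2 * ln (1 / \<delta>) / real m)"
  have a_eq: "2 * Xstar N X / (lam * r) * sqrt (2 * ln (1 / \<delta>) / real m) = a + 2 * radius * (a / (2 * radius))"
    unfolding a_def value_bound_def using radius_pos by simp
  show ?thesis
  proof (cases "value_bound = 0")
    case True
    have "gen_err \<rho> (fz z) \<le> emp_err_A m r z (Az z)" if z: "good_sample z" for z
    proof -
      obtain w where "w \<in> weights" "gen_err \<rho> (fz z) = risk w" "emp_risk w z \<le> emp_err_A m r z (Az z)"
        using learned_hypothesis_risk[OF z] by blast
      then show ?thesis using risk_eq_emp_risk_of_value_bound_0[OF True] by simp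
    qed
    moreover have "0 \<le> 4 * rad_complexity m \<rho> N X / (lam * r)"
      using rad_complexity_nonneg lam_pos r_pos by simp
    moreover have "a = 0" unfolding a_def using True by simp
    moreover have "measure sample {z \<in> space sample. good_sample z} = 1"
      using prob_space.prob_Collect_eq_1[OF prob_space_sample good_sample_sets] AE_good_sample by simp
    ultimately show ?thesis unfolding a_eq using good_sample_sets \<delta>
      by (intro bexI[of _ "{z \<in> space sample. good_sample z}"]) fastforce+
  next
    case False
    then have "value_bound > 0" using value_bound_nonneg by simp
    moreover from this have "a / (2 * radius) > 0" unfolding a_def using \<delta> m_pos radius_pos by simp
    ultimately obtain D where D: "finite D" "D \<subseteq> weights" "D \<noteq> {}"
      and net: "\<And>w. w \<in> weights \<Longrightarrow> \<exists>d\<in>D. norm (w - d) < a / (2 * radius)"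
      using finite_net_weights by blast
    let ?S = "{z \<in> space sample. good_sample z \<and> sup_dev D z - (\<integral>z. sup_dev D z \<partial>sample) < a}"
    have "gen_err \<rho> (fz z) \<le> emp_err_A m r z (Az z) + 4 * rad_complexity m \<rho> N X / (lam * r)
        + (a + 2 * radius * (a / (2 * radius)))" if "z \<in> ?S" for z
      using gen_err_le_of_small_sup_dev[OF D, of "a / (2 * radius)" z a] net that by (simp add: add.assoc)
    then show ?thesis unfolding a_eq
      using small_sup_dev_sets[OF D] measure_small_sup_dev[OF D \<open>value_bound > 0\<close> \<delta> a_def]
      by (intro bexI[of _ ?S]) auto
  qed
qed

end

theorem theorem2:
  fixes X :: "(real^'d) set"
    and \<rho> :: "((real^'d) \<times> real) measure"
    and m :: nat and r lam \<delta> :: real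
    and N :: "real^'d^'d \<Rightarrow> real"
    and Az :: "(nat \<Rightarrow> (real^'d) \<times> real) \<Rightarrow> real^'d^'d"
    and fz :: "(nat \<Rightarrow> (real^'d) \<times> real) \<Rightarrow> (real^'d \<Rightarrow> real)"
  assumes m_pos: "m \<ge> 1"
    and X_domain: "open X" "connected X" "bounded X" "X \<noteq> {}"
    and rho_prob: "prob_space \<rho>" and rho_sets: "sets \<rho> = sets borel"
    and rho_supp: "AE zz in \<rho>. zz \<in> X \<times> {-1, 1}"
    and r_pos: "r > 0" and lam_pos: "lam > 0"
    and N_norm: "is_matrix_norm N"
    and Az_min: "\<And>z. transpose (Az z) = Az z \<and>
        (\<forall>A. transpose A = A \<longrightarrow>
           emp_err_A m r z (Az z) + lam * N (Az z) \<le> emp_err_A m r z A + lam * N A)"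
    and fz_min: "\<And>z. fz z \<in> hyp_space m r z (Az z) \<and>
        (\<forall>f \<in> hyp_space m r z (Az z). emp_hinge m z (fz z) \<le> emp_hinge m z f)"
    and delta: "0 < \<delta>" "\<delta> < 1"
  shows "\<exists>S \<in> sets (sample_measure m \<rho>).
           measure (sample_measure m \<rho>) S \<ge> 1 - \<delta> \<and>
           (\<forall>z \<in> S. gen_err \<rho> (fz z) \<le> emp_err_A m r z (Az z)
                + 4 * rad_complexity m \<rho> N X / (lam * r)
                + 2 * Xstar N X / (lam * r) * sqrt (2 * ln (1 / \<delta>) / real m))"
proof -
  interpret similarity_learning X \<rho> m r lam N Az fz
    by (rule similarity_learning.intro) (use assms in auto)
  show ?thesis by (rule generalization_bound[OF delta])
qed

end
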